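(* Let $d\ge 2$ and $n\ge 1$ be integers and let $G=(E,D,\partial D)$ be the $d$-dimensional hypercubic lattice graph described in the context. If $\gamma,\gamma':E\to(0,\infty)$ are two conductivities with equal Dirichlet-to-Neumann matrices, $\Lambda_\gamma=\Lambda_{\gamma'}$, then $\gamma=\gamma'$ on every edge of $E$.
   Context: $D=\{x\in\mathbb Z^d: 1\le x_i\le n \text{ for all } i\}$ and $\partial D=\{p\in\mathbb Z^d:\min_{q\in D}\|q-p\|_{\ell^1}=1\}$ (the points with exactly one coordinate in $\{0,n+1\}$ and all others in $\{1,\dots,n\}$). $E$ is the set of unordered pairs $pq=\{p,q\}\subseteq D\cup\partial D$ with $\|p-q\|_{\ell^1}=1$ and $\{p,q\}\not\subseteq\partial D$. Write $\mathcal N(p)=\{q:pq\in E\}$; each $b\in\partial D$ has exactly one neighbour $q_b$, and $q_b\in D$. A conductivity is a map $\gamma:E\to(0,\infty)$, $\gamma_{pq}=\gamma_{qp}$. For $\mathbf u\in\mathbb R^{D\cup\partial D}$ set $(\Delta_\gamma\mathbf u)_p=\sum_{q\in\mathcal N(p)}\gamma_{pq}(\mathbf u_q-\mathbf u_p)$ for $p\in D$. For every $\varphi\in\mathbb R^{\partial D}$ there is a unique $\mathbf u$ with $\Delta_\gamma\mathbf u=0$ on $D$ and $\mathbf u=\varphi$ on $\partial D$; write $S_\gamma\varphi=\mathbf u$. The boundary current is $(D_\gamma\mathbf u)_b=\gamma_{bq_b}(\mathbf u_{q_b}-\mathbf u_b)$ for $b\in\partial D$, and the DtN matrix is $\Lambda_\gamma=D_\gamma\circ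 S_\gamma:\mathbb R^{\partial D}\to\mathbb R^{\partial D}$. *)

theory Defs
  imports Complex_Main "HOL-Library.FuncSet"
begin

text \<open>Lattice points of Z^d are represented as integer lists of length d.\<close>

definition l1dist :: "int list \<Rightarrow> int list \<Rightarrow> int" where
  "l1dist p q = (\<Sum>i<length p. \<bar>p ! i - q ! i\<bar>)"

definition Dom :: "nat \<Rightarrow> nat \<Rightarrow> int list set" where
  "Dom d n = {x. length x = d \<and> (\<forall>i<d. 1 \<le> x ! i \<and> x ! i \<le> int n)}"

definition Bdry :: "nat \<Rightarrow> nat \<Rightarrow> int list set" where
  "Bdry d n = {p. length p = d \<and> (\<exists>q\<in>Dom d n. l1dist p q = 1) \<and>
                               (\<forall>q\<in>Dom d n. 1 \<le> l1dist p q)}"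

definition Edges :: "nat \<Rightarrow> nat \<Rightarrow> int list set set" where
  "Edges d n = {{p, q} | p q. p \<in> Dom d n \<union> Bdry d n \<and> q \<in> Dom d n \<union> Bdry d n \<and>
                  l1dist p q = 1 \<and> \<not> ({p, q} \<subseteq> Bdry d n)}"

definition Nbr :: "nat \<Rightarrow> nat \<Rightarrow> int list \<Rightarrow> int list set" where
  "Nbr d n p = {q. {p, q} \<in> Edges d n}"

text \<open>Conductivities are maps from (unordered) edges to reals; positivity is assumed separately.\<close>

definition harmonic :: "nat \<Rightarrow> nat \<Rightarrow> (int list set \<Rightarrow> real) \<Rightarrow> (int list \<Rightarrow> real) \<Rightarrow> bool" where
  "harmonic d n \<gamma> u \<longleftrightarrow>
     (\<forall>p\<in>Dom d n. (\<Sum>q\<in>Nbr d n p. \<gamma> {p, q} * (u q - u p)) = 0)"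

definition harm_ext :: "nat \<Rightarrow> nat \<Rightarrow> (int list set \<Rightarrow> real) \<Rightarrow> (int list \<Rightarrow> real) \<Rightarrow> (int list \<Rightarrow> real)" where
  "harm_ext d n \<gamma> \<phi> = (THE u. u \<in> extensional (Dom d n \<union> Bdry d n) \<and>
        harmonic d n \<gamma> u \<and> (\<forall>b\<in>Bdry d n. u b = \<phi> b))"

definition bnbr :: "nat \<Rightarrow> nat \<Rightarrow> int list \<Rightarrow> int list" where
  "bnbr d n b = (THE q. q \<in> Nbr d n b)"

definition current :: "nat \<Rightarrow> nat \<Rightarrow> (int list set \<Rightarrow> real) \<Rightarrow> (int list \<Rightarrow> real) \<Rightarrow> (int list \<Rightarrow> real)" where
  "current d n \<gamma> u = (\<lambda>b. if b \<in> Bdry d n then \<gamma> {b, bnbr d n b} * (u (bnbr d n b) - u b) else 0)"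

text \<open>DtN map: phi (only its values on dD matter) to boundary currents (extensional outside dD).\<close>
definition DtN :: "nat \<Rightarrow> nat \<Rightarrow> (int list set \<Rightarrow> real) \<Rightarrow> (int list \<Rightarrow> real) \<Rightarrow> (int list \<Rightarrow> real)" where
  "DtN d n \<gamma> \<phi> = current d n \<gamma> (harm_ext d n \<gamma> \<phi>)"

end

theory Submission
  imports Defs
begin

text \<open>Equal Dirichlet-to-Neumann maps mean that the Cauchy data (boundary values
  and boundary currents) of every \<open>\<gamma>\<close>-harmonic function are Cauchy data of a \<open>\<gamma>'\<close>-harmonic one;
  by Green's identity this yields Alessandrini's identity \<open>\<Sum>(\<gamma> - \<gamma>') du dv = 0\<close> over the edges,
  for every \<open>\<gamma>\<close>-harmonic \<open>u\<close> and \<open>\<gamma>'\<close>-harmonic \<open>v\<close>. On the lattice the Cauchy problem can be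
  solved layer by layer from a half-space, so \<open>u\<close> and \<open>v\<close> can be chosen to continue a boundary
  delta in opposite directions transverse to a face (this is where \<open>d \<ge> 2\<close> is used). Their
  gradients then overlap on a single edge, whose conductivity is thereby recovered: first the
  edges to the boundary, then the edges inside the face \<open>x\<^sub>0 = lo 0\<close>. Once these are known, Cauchy
  data on the box determine Cauchy data on the box with that face removed, and induction on the
  width of the box in direction 0 recovers every edge.\<close>

definition lattice_nbrs :: "int list \<Rightarrow> int list set" where
  "lattice_nbrs x = (\<lambda>(i, t). x[i := x!i + t]) ` ({..<length x} \<times> {1, -1})"

lemma lattice_nbrs_iff:
  "y \<in> lattice_nbrs x \<longleftrightarrow> (\<exists>i t. i < length x \<and> (t = 1 \<or> t = -1) \<and> y = x[i := x!i + t])"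
  unfolding lattice_nbrs_def by force

lemma shift_in_lattice_nbrs:
  "i < length x \<Longrightarrow> t = 1 \<or> t = -1 \<Longrightarrow> x[i := x!i + t] \<in> lattice_nbrs x"
  unfolding lattice_nbrs_iff by blast

lemma finite_lattice_nbrs: "finite (lattice_nbrs x)"
  unfolding lattice_nbrs_def by simp

lemma length_lattice_nbrs: "y \<in> lattice_nbrs x \<Longrightarrow> length y = length x"
  by (auto simp: lattice_nbrs_iff)

lemma lattice_nbrs_sym: "y \<in> lattice_nbrs x \<Longrightarrow> x \<in> lattice_nbrs y"
proof -
  assume "y \<in> lattice_nbrs x"
  then obtain i t where "i < length x" "t = 1 \<or> t = -1" "y = x[i := x!i + t]"
    by (auto simp: lattice_nbrs_iff)
  then have "i < length y" "-t = 1 \<or> -t = -1" "x = y[i := y!i + - t]" by auto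
  then show ?thesis unfolding lattice_nbrs_iff by blast
qed

lemma lattice_nbrs_coord_diff: "y \<in> lattice_nbrs x \<Longrightarrow> \<bar>x!j - y!j\<bar> \<le> 1"
  by (cases "j < length x") (auto simp: lattice_nbrs_iff nth_list_update)

lemma lattice_nbrs_other_coord:
  assumes "y \<in> lattice_nbrs x" "y \<noteq> x[l := x!l + s]" "s = 1 \<or> s = -1"
  shows "s * y!l \<le> s * x!l"
proof -
  obtain i t where it: "i < length x" "t = 1 \<or> t = -1" "y = x[i := x!i + t]"
    using assms(1) by (auto simp: lattice_nbrs_iff)
  show ?thesis
  proof (cases "i = l")
    case True
    then have "t = - s" using assms(2,3) it by auto
    then show ?thesis using True it assms(3) by auto
  qed (use it in simp)
qed

text \<open>\<open>Dom d n\<close> is \<open>lbox d (\<lambda>_. 1) (\<lambda>_. int n)\<close>; general bounds are needed because the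
  induction removes the face \<open>x\<^sub>0 = lo 0\<close> of the box.\<close>

definition lbox :: "nat \<Rightarrow> (nat \<Rightarrow> int) \<Rightarrow> (nat \<Rightarrow> int) \<Rightarrow> int list set" where
  "lbox d lo hi = {x. length x = d \<and> (\<forall>i<d. lo i \<le> x!i \<and> x!i \<le> hi i)}"

definition lbox_bdry :: "nat \<Rightarrow> (nat \<Rightarrow> int) \<Rightarrow> (nat \<Rightarrow> int) \<Rightarrow> int list set" where
  "lbox_bdry d lo hi = {x. length x = d \<and> (\<exists>i<d. (x!i = lo i - 1 \<or> x!i = hi i + 1) \<and>
      (\<forall>l<d. l \<noteq> i \<longrightarrow> lo l \<le> x!l \<and> x!l \<le> hi l))}"

definition lbox_closure :: "nat \<Rightarrow> (nat \<Rightarrow> int) \<Rightarrow> (nat \<Rightarrow> int) \<Rightarrow> int list set" where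
  "lbox_closure d lo hi = lbox d lo hi \<union> lbox_bdry d lo hi"

lemma length_lbox_closure: "x \<in> lbox_closure d lo hi \<Longrightarrow> length x = d"
  unfolding lbox_closure_def lbox_def lbox_bdry_def by auto

lemma lbox_subset_closure: "lbox d lo hi \<subseteq> lbox_closure d lo hi"
  unfolding lbox_closure_def by auto

lemma lbox_bdry_disjoint: "x \<in> lbox_bdry d lo hi \<Longrightarrow> x \<notin> lbox d lo hi"
  unfolding lbox_def lbox_bdry_def by force

lemma closure_minus_lbox: "lbox_closure d lo hi - lbox d lo hi = lbox_bdry d lo hi"
  unfolding lbox_closure_def using lbox_bdry_disjoint by blast

lemma finite_lbox_closure: "finite (lbox_closure d lo hi)"
proof -
  define S where "S = (\<Sum>i<d. \<bar>lo i\<bar> + \<bar>hi i\<bar>) + 1"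
  have "\<bar>x!i\<bar> \<le> S" if x: "x \<in> lbox_closure d lo hi" and i: "i < d" for x i
  proof -
    have "\<bar>lo i\<bar> + \<bar>hi i\<bar> \<le> (\<Sum>i<d. \<bar>lo i\<bar> + \<bar>hi i\<bar>)"
      by (rule member_le_sum) (use i in auto)
    moreover have "\<bar>x!i\<bar> \<le> \<bar>lo i\<bar> + \<bar>hi i\<bar> + 1"
    proof (cases "x \<in> lbox d lo hi")
      case False
      then obtain i0 where "x!i0 = lo i0 - 1 \<or> x!i0 = hi i0 + 1"
        "\<forall>l<d. l \<noteq> i0 \<longrightarrow> lo l \<le> x!l \<and> x!l \<le> hi l"
        using x unfolding lbox_closure_def lbox_bdry_def by auto
      then show ?thesis using i by (cases "i = i0") auto
    qed (use i in \<open>auto simp: lbox_def\<close>)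
    ultimately show ?thesis unfolding S_def by linarith
  qed
  then have "lbox_closure d lo hi \<subseteq> {xs. set xs \<subseteq> {-S..S} \<and> length xs = d}"
    by (fastforce simp: length_lbox_closure in_set_conv_nth)
  moreover have "finite {xs. set xs \<subseteq> {-S..S} \<and> length xs = d}"
    by (rule finite_lists_length_eq) auto
  ultimately show ?thesis by (rule finite_subset)
qed

lemma lattice_nbrs_lbox:
  assumes "x \<in> lbox d lo hi" "y \<in> lattice_nbrs x"
  shows "y \<in> lbox_closure d lo hi"
proof -
  obtain i t where it: "i < length x" "t = 1 \<or> t = -1" "y = x[i := x!i + t]"
    using assms(2) by (auto simp: lattice_nbrs_iff)
  have y: "length y = d" "i < d" "\<forall>l<d. l \<noteq> i \<longrightarrow> lo l \<le> y!l \<and> y!l \<le> hi l"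
    using assms(1) it by (auto simp: lbox_def)
  show ?thesis
  proof (cases "lo i \<le> y!i \<and> y!i \<le> hi i")
    case True
    then have "lo l \<le> y!l \<and> y!l \<le> hi l" if "l < d" for l using y(3) that by (cases "l = i") auto
    then have "y \<in> lbox d lo hi" using y(1) unfolding lbox_def by blast
    then show ?thesis by (simp add: lbox_closure_def)
  next
    case False
    have "lo i - 1 \<le> y!i" "y!i \<le> hi i + 1" using assms(1) it y(2) by (auto simp: lbox_def)
    then have "y!i = lo i - 1 \<or> y!i = hi i + 1" using False by auto
    then have "y \<in> lbox_bdry d lo hi" using y unfolding lbox_bdry_def by blast
    then show ?thesis by (simp add: lbox_closure_def)
  qed
qed

lemma lattice_nbrs_lbox_subset: "x \<in> lbox d lo hi \<Longrightarrow> lattice_nbrs x \<subseteq> lbox_closure d lo hi"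
  using lattice_nbrs_lbox by blast

lemma lbox_bdryE:
  assumes "b \<in> lbox_bdry d lo hi" "\<forall>i<d. lo i \<le> hi i"
  obtains i where "i < d" "b!i = lo i - 1 \<or> b!i = hi i + 1" "b!i < lo i \<or> hi i < b!i"
    "\<forall>l<d. l \<noteq> i \<longrightarrow> lo l \<le> b!l \<and> b!l \<le> hi l" "length b = d"
  using assms unfolding lbox_bdry_def by auto

lemma lbox_bdry_nbr_coord:
  assumes b: "b \<in> lbox_bdry d lo hi" and lohi: "\<forall>i<d. lo i \<le> hi i"
    and q: "q \<in> lattice_nbrs b" "q \<in> lbox d lo hi"
    and j: "lo j \<le> b!j" "b!j \<le> hi j"
  shows "q!j = b!j"
proof -
  obtain i where i: "i < d" "b!i < lo i \<or> hi i < b!i" using b lohi by (rule lbox_bdryE)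
  obtain l t where lt: "l < length b" "q = b[l := b!l + t]"
    using q(1) by (auto simp: lattice_nbrs_iff)
  have "l = i"
  proof (rule ccontr)
    assume "l \<noteq> i"
    then have "q!i = b!i" using lt by simp
    then show False using q(2) i by (auto simp: lbox_def)
  qed
  then have "j \<noteq> l" using i j by auto
  then show ?thesis using lt by simp
qed

lemma lbox_bdry_unique_nbr:
  assumes b: "b \<in> lbox_bdry d lo hi" and lohi: "\<forall>i<d. lo i \<le> hi i"
    and "q1 \<in> lattice_nbrs b" "q1 \<in> lbox d lo hi" "q2 \<in> lattice_nbrs b" "q2 \<in> lbox d lo hi"
  shows "q1 = q2"
proof (rule nth_equalityI)
  obtain i where i: "i < d" "b!i = lo i - 1 \<or> b!i = hi i + 1"
    "\<forall>l<d. l \<noteq> i \<longrightarrow> lo l \<le> b!l \<and> b!l \<le> hi l" "length b = d"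
    using b lohi by (rule lbox_bdryE)
  show len: "length q1 = length q2" using assms(3,5) by (simp add: length_lattice_nbrs)
  fix j assume j: "j < length q1"
  show "q1!j = q2!j"
  proof (cases "j = i")
    case True
    have "lo i \<le> q1!i \<and> q1!i \<le> hi i" "lo i \<le> q2!i \<and> q2!i \<le> hi i"
      using assms(4,6) i(1) by (auto simp: lbox_def)
    moreover have "\<bar>b!i - q1!i\<bar> \<le> 1" "\<bar>b!i - q2!i\<bar> \<le> 1"
      using assms(3,5) by (simp_all add: lattice_nbrs_coord_diff)
    ultimately show ?thesis using True i(2) by auto
  next
    case False
    then have "lo j \<le> b!j" "b!j \<le> hi j" using i j assms(4) by (auto simp: lbox_def)
    then show ?thesis using lbox_bdry_nbr_coord[OF b lohi] assms(3-6) by metis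
  qed
qed

lemma lbox_bdry_ex_nbr:
  assumes b: "b \<in> lbox_bdry d lo hi" and lohi: "\<forall>i<d. lo i \<le> hi i"
  obtains q where "q \<in> lattice_nbrs b" "q \<in> lbox d lo hi"
proof -
  obtain i where i: "i < d" "b!i = lo i - 1 \<or> b!i = hi i + 1"
    "\<forall>l<d. l \<noteq> i \<longrightarrow> lo l \<le> b!l \<and> b!l \<le> hi l" "length b = d"
    using b lohi by (rule lbox_bdryE)
  define t where "t = (if b!i = lo i - 1 then (1::int) else -1)"
  have "b[i := b!i + t] \<in> lattice_nbrs b"
    using i by (intro shift_in_lattice_nbrs) (auto simp: t_def)
  moreover have "b[i := b!i + t] \<in> lbox d lo hi"
    using i lohi by (auto simp: lbox_def t_def nth_list_update)
  ultimately show ?thesis by (rule that)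
qed

lemma lattice_nbrs_irrefl: "x \<notin> lattice_nbrs x"
proof
  assume "x \<in> lattice_nbrs x"
  then obtain i t where "i < length x" "t = 1 \<or> t = -1" "x = x[i := x!i + t]"
    by (auto simp: lattice_nbrs_iff)
  then have "x!i = x!i + t" "t \<noteq> 0" by (metis nth_list_update_eq, auto)
  then show False by simp
qed

lemma lattice_nbrs_closure:
  assumes "y \<in> lattice_nbrs x" "x \<in> lbox d lo hi \<or> y \<in> lbox d lo hi"
  shows "x \<in> lbox_closure d lo hi" "y \<in> lbox_closure d lo hi"
  using assms lattice_nbrs_lbox[of _ d lo hi] lattice_nbrs_sym lbox_subset_closure by blast+

text \<open>If \<open>s = 0\<close> then \<open>p\<close> has no edges, so the junk
  value of division by zero is harmless.\<close>

lemma kron_reduction: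
  fixes c :: "'a \<Rightarrow> 'a \<Rightarrow> real" and u :: "'a \<Rightarrow> real"
  assumes fin: "finite V" and p: "p \<in> V" and sym: "\<And>x y. c x y = c y x" and nonneg: "\<And>x y. 0 \<le> c x y"
  defines "s \<equiv> \<Sum>q\<in>V - {p}. c p q"
  defines "w \<equiv> u(p := (\<Sum>q\<in>V - {p}. c p q * u q) / s)"
  shows "(\<Sum>q\<in>V. c p q * (w q - w p)) = 0"
    and "r \<in> V - {p} \<Longrightarrow>
      (\<Sum>q\<in>V. c r q * (w q - w r)) = (\<Sum>q\<in>V - {p}. (c r q + c r p * c p q / s) * (u q - u r))"
proof -
  have split: "(\<Sum>q\<in>V. f q) = f p + (\<Sum>q\<in>V - {p}. f q)" for f :: "'a \<Rightarrow> real"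
    using fin p by (simp add: sum.remove)
  have s0: "c p q = 0" if "s = 0" "q \<in> V - {p}" for q
    using that sum_nonneg_eq_0_iff[of "V - {p}"] fin nonneg unfolding s_def by blast
  have mean: "(\<Sum>q\<in>V - {p}. c p q * (u q - x)) = s * (w p - x)" for x
  proof -
    have "(\<Sum>q\<in>V - {p}. c p q * (u q - x)) = (\<Sum>q\<in>V - {p}. c p q * u q) - s * x"
      by (simp add: s_def algebra_simps sum_subtractf sum_distrib_left)
    also have "(\<Sum>q\<in>V - {p}. c p q * u q) = s * w p"
      using s0 by (cases "s = 0") (simp_all add: w_def)
    finally show ?thesis by (simp add: algebra_simps)
  qed
  show "(\<Sum>q\<in>V. c p q * (w q - w p)) = 0"
    using mean[of "w p"] split by (simp add: w_def)
  assume r: "r \<in> V - {p}"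
  have "c r p * (w p - u r) = (\<Sum>q\<in>V - {p}. (c r p * c p q / s) * (u q - u r))"
  proof (cases "s = 0")
    case True
    then show ?thesis using s0[OF True r] sym[of r p] by simp
  next
    case False
    have "(\<Sum>q\<in>V - {p}. (c r p * c p q / s) * (u q - u r)) =
        c r p / s * (\<Sum>q\<in>V - {p}. c p q * (u q - u r))"
      by (simp add: sum_distrib_left mult_ac)
    then show ?thesis using False by (simp add: mean)
  qed
  then show "(\<Sum>q\<in>V. c r q * (w q - w r)) = (\<Sum>q\<in>V - {p}. (c r q + c r p * c p q / s) * (u q - u r))"
    using split r by (simp add: w_def sum.distrib[symmetric] algebra_simps)
qed

lemma dirichlet_problem_solvable:
  fixes c :: "'a \<Rightarrow> 'a \<Rightarrow> real"
  assumes "finite V" "I \<subseteq> V" "\<And>x y. c x y = c y x" "\<And>x y. 0 \<le> c x y"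
  shows "\<exists>u. (\<forall>p\<in>I. (\<Sum>q\<in>V. c p q * (u q - u p)) = 0) \<and> (\<forall>b\<in>V - I. u b = \<phi> b)"
proof -
  have "finite I" using assms(1,2) by (rule finite_subset[rotated])
  then show ?thesis using assms
  proof (induction I arbitrary: V c rule: finite_induct)
    case (insert p I)
    define s where "s = (\<Sum>q\<in>V - {p}. c p q)"
    define c' where "c' r q = c r q + c r p * c p q / s" for r q
    have "0 \<le> s" unfolding s_def using insert.prems(4) by (simp add: sum_nonneg)
    then have "c' x y = c' y x" "0 \<le> c' x y" for x y
      using insert.prems(3,4) by (simp_all add: c'_def)
    moreover have "finite (V - {p})" "I \<subseteq> V - {p}" using insert by auto
    ultimately obtain u where u: "\<forall>r\<in>I. (\<Sum>q\<in>V - {p}. c' r q * (u q - u r)) = 0"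
      "\<forall>b\<in>V - {p} - I. u b = \<phi> b"
      using insert.IH by blast
    note kron = kron_reduction[where V = V and p = p and c = c and u = u, folded s_def,
      OF insert.prems(1) _ insert.prems(3,4)]
    show ?case
      by (rule exI[of _ "u(p := (\<Sum>q\<in>V - {p}. c p q * u q) / s)"])
        (use kron u insert.prems(2) insert.hyps(2) in \<open>auto simp: c'_def\<close>)
  qed auto
qed

lemma green_identity:
  fixes c :: "'a \<Rightarrow> 'a \<Rightarrow> real"
  assumes fin: "finite V" and IV: "I \<subseteq> V" and sym: "\<And>x y. c x y = c y x"
    and harm: "\<forall>p\<in>I. (\<Sum>q\<in>V. c p q * (u q - u p)) = 0"
  shows "(\<Sum>p\<in>V. \<Sum>q\<in>V. c p q * (u p - u q) * (w p - w q)) =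
         -2 * (\<Sum>b\<in>V - I. w b * (\<Sum>q\<in>V. c b q * (u q - u b)))"
proof -
  define A where "A = (\<Sum>p\<in>V. \<Sum>q\<in>V. c p q * (u p - u q) * w p)"
  define B where "B = (\<Sum>p\<in>V. \<Sum>q\<in>V. c p q * (u p - u q) * w q)"
  have "B = (\<Sum>q\<in>V. \<Sum>p\<in>V. c p q * (u p - u q) * w q)"
    unfolding B_def by (rule sum.swap)
  also have "\<dots> = - A"
    unfolding A_def by (simp add: sum_negf[symmetric] sym algebra_simps)
  finally have "B = - A" .
  moreover have "(\<Sum>p\<in>V. \<Sum>q\<in>V. c p q * (u p - u q) * (w p - w q)) = A - B"
    unfolding A_def B_def by (simp add: sum_subtractf[symmetric] algebra_simps)
  moreover have "A = - (\<Sum>p\<in>V. w p * (\<Sum>q\<in>V. c p q * (u q - u p)))"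
    unfolding A_def by (simp add: sum_distrib_left sum_negf[symmetric] algebra_simps)
  moreover have "(\<Sum>p\<in>V. w p * (\<Sum>q\<in>V. c p q * (u q - u p)))
      = (\<Sum>b\<in>V - I. w b * (\<Sum>q\<in>V. c b q * (u q - u b)))"
    using harm by (subst sum.subset_diff[OF IV fin]) simp
  ultimately show ?thesis by simp
qed

lemma double_sum_supported_on_pair:
  fixes F :: "'a \<Rightarrow> 'a \<Rightarrow> real"
  assumes fin: "finite V" and "a \<in> V" "b \<in> V" "a \<noteq> b"
    and supp: "\<And>p q. p \<in> V \<Longrightarrow> q \<in> V \<Longrightarrow> F p q \<noteq> 0 \<Longrightarrow> (p, q) = (a, b) \<or> (p, q) = (b, a)"
  shows "(\<Sum>p\<in>V. \<Sum>q\<in>V. F p q) = F a b + F b a"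
proof -
  have "(\<Sum>p\<in>V. \<Sum>q\<in>V. F p q) = (\<Sum>(p, q)\<in>V \<times> V. F p q)"
    by (simp add: sum.cartesian_product)
  also have "\<dots> = (\<Sum>(p, q)\<in>{(a, b), (b, a)}. F p q)"
    by (rule sum.mono_neutral_right) (use assms in auto)
  also have "\<dots> = F a b + F b a" using \<open>a \<noteq> b\<close> by simp
  finally show ?thesis .
qed

definition edge_weight :: "nat \<Rightarrow> (nat \<Rightarrow> int) \<Rightarrow> (nat \<Rightarrow> int) \<Rightarrow> (int list set \<Rightarrow> real) \<Rightarrow>
    int list \<Rightarrow> int list \<Rightarrow> real" where
  "edge_weight d lo hi \<gamma> x y =
     (if y \<in> lattice_nbrs x \<and> (x \<in> lbox d lo hi \<or> y \<in> lbox d lo hi) then \<gamma> {x, y} else 0)"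

definition laplacian :: "(int list set \<Rightarrow> real) \<Rightarrow> (int list \<Rightarrow> real) \<Rightarrow> int list \<Rightarrow> real" where
  "laplacian \<gamma> u x = (\<Sum>y\<in>lattice_nbrs x. \<gamma> {x, y} * (u y - u x))"

definition harmonic_in :: "nat \<Rightarrow> (nat \<Rightarrow> int) \<Rightarrow> (nat \<Rightarrow> int) \<Rightarrow> (int list set \<Rightarrow> real) \<Rightarrow>
    (int list \<Rightarrow> real) \<Rightarrow> bool" where
  "harmonic_in d lo hi \<gamma> u \<longleftrightarrow> (\<forall>x\<in>lbox d lo hi. laplacian \<gamma> u x = 0)"

definition boundary_current :: "nat \<Rightarrow> (nat \<Rightarrow> int) \<Rightarrow> (nat \<Rightarrow> int) \<Rightarrow> (int list set \<Rightarrow> real) \<Rightarrow>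
    (int list \<Rightarrow> real) \<Rightarrow> int list \<Rightarrow> real" where
  "boundary_current d lo hi \<gamma> u b =
     (\<Sum>y\<in>lbox_closure d lo hi. edge_weight d lo hi \<gamma> b y * (u y - u b))"

definition dirichlet_form :: "nat \<Rightarrow> (nat \<Rightarrow> int) \<Rightarrow> (nat \<Rightarrow> int) \<Rightarrow> (int list set \<Rightarrow> real) \<Rightarrow>
    (int list \<Rightarrow> real) \<Rightarrow> (int list \<Rightarrow> real) \<Rightarrow> real" where
  "dirichlet_form d lo hi \<gamma> u w = (\<Sum>p\<in>lbox_closure d lo hi. \<Sum>q\<in>lbox_closure d lo hi.
     edge_weight d lo hi \<gamma> p q * (u p - u q) * (w p - w q))"

definition pos_conductivity :: "nat \<Rightarrow> (nat \<Rightarrow> int) \<Rightarrow> (nat \<Rightarrow> int) \<Rightarrow> (int list set \<Rightarrow> real) \<Rightarrow> bool" where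
  "pos_conductivity d lo hi \<gamma> \<longleftrightarrow>
     (\<forall>x y. y \<in> lattice_nbrs x \<longrightarrow> (x \<in> lbox d lo hi \<or> y \<in> lbox d lo hi) \<longrightarrow> 0 < \<gamma> {x, y})"

definition edges_agree :: "nat \<Rightarrow> (nat \<Rightarrow> int) \<Rightarrow> (nat \<Rightarrow> int) \<Rightarrow> (int list set \<Rightarrow> real) \<Rightarrow>
    (int list set \<Rightarrow> real) \<Rightarrow> bool" where
  "edges_agree d lo hi \<gamma> \<gamma>' \<longleftrightarrow>
     (\<forall>x y. y \<in> lattice_nbrs x \<longrightarrow> (x \<in> lbox d lo hi \<or> y \<in> lbox d lo hi) \<longrightarrow> \<gamma> {x, y} = \<gamma>' {x, y})"

text \<open>The hypothesis \<open>\<Lambda>\<^sub>\<gamma> = \<Lambda>\<^sub>\<gamma>'\<close> in a form that passes to the box with a face removed.\<close>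

definition cauchy_data_incl :: "nat \<Rightarrow> (nat \<Rightarrow> int) \<Rightarrow> (nat \<Rightarrow> int) \<Rightarrow> (int list set \<Rightarrow> real) \<Rightarrow>
    (int list set \<Rightarrow> real) \<Rightarrow> bool" where
  "cauchy_data_incl d lo hi \<gamma> \<gamma>' \<longleftrightarrow> (\<forall>u. harmonic_in d lo hi \<gamma> u \<longrightarrow> (\<exists>u'. harmonic_in d lo hi \<gamma>' u' \<and>
     (\<forall>b\<in>lbox_bdry d lo hi. u' b = u b \<and>
        boundary_current d lo hi \<gamma>' u' b = boundary_current d lo hi \<gamma> u b)))"

lemma edge_weight_commute: "edge_weight d lo hi \<gamma> x y = edge_weight d lo hi \<gamma> y x"
  unfolding edge_weight_def using lattice_nbrs_sym by (auto simp: insert_commute)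

lemma edge_weight_nonneg: "pos_conductivity d lo hi \<gamma> \<Longrightarrow> 0 \<le> edge_weight d lo hi \<gamma> x y"
  unfolding edge_weight_def pos_conductivity_def by (auto intro: less_imp_le)

lemma pos_conductivityD:
  "pos_conductivity d lo hi \<gamma> \<Longrightarrow> y \<in> lattice_nbrs x \<Longrightarrow> x \<in> lbox d lo hi \<or> y \<in> lbox d lo hi \<Longrightarrow>
     0 < \<gamma> {x, y}"
  unfolding pos_conductivity_def by blast

lemma laplacian_remove:
  "y \<in> lattice_nbrs x \<Longrightarrow>
     laplacian \<gamma> u x = \<gamma> {x, y} * (u y - u x) + (\<Sum>w\<in>lattice_nbrs x - {y}. \<gamma> {x, w} * (u w - u x))"
  unfolding laplacian_def by (simp add: sum.remove finite_lattice_nbrs)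

lemma harmonic_in_cong:
  assumes "\<And>p. p \<in> lbox_closure d lo hi \<Longrightarrow> f p = g p"
  shows "harmonic_in d lo hi \<gamma> f \<longleftrightarrow> harmonic_in d lo hi \<gamma> g"
proof -
  have "laplacian \<gamma> f x = laplacian \<gamma> g x" if x: "x \<in> lbox d lo hi" for x
  proof -
    have "x \<in> lbox_closure d lo hi" using x lbox_subset_closure by blast
    then show ?thesis
      using assms lattice_nbrs_lbox_subset[OF x] unfolding laplacian_def by (intro sum.cong) auto
  qed
  then show ?thesis unfolding harmonic_in_def by simp
qed

lemma laplacian_diff: "laplacian \<gamma> (\<lambda>x. u x - v x) x = laplacian \<gamma> u x - laplacian \<gamma> v x"
  unfolding laplacian_def by (simp add: sum_subtractf[symmetric] algebra_simps)

lemma harmonic_in_diff: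
  "harmonic_in d lo hi \<gamma> u \<Longrightarrow> harmonic_in d lo hi \<gamma> v \<Longrightarrow> harmonic_in d lo hi \<gamma> (\<lambda>x. u x - v x)"
  unfolding harmonic_in_def by (simp add: laplacian_diff)

lemma boundary_current_cong:
  "(\<And>p. p \<in> lbox_closure d lo hi \<Longrightarrow> f p = g p) \<Longrightarrow> b \<in> lbox_closure d lo hi \<Longrightarrow>
     boundary_current d lo hi \<gamma> f b = boundary_current d lo hi \<gamma> g b"
  unfolding boundary_current_def by simp

lemma sum_edge_weight_lbox:
  assumes "x \<in> lbox d lo hi"
  shows "(\<Sum>y\<in>lbox_closure d lo hi. edge_weight d lo hi \<gamma> x y * f y) =
    (\<Sum>y\<in>lattice_nbrs x. \<gamma> {x, y} * f y)"
proof (rule sum.mono_neutral_cong_right)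
  show "lattice_nbrs x \<subseteq> lbox_closure d lo hi" using assms by (rule lattice_nbrs_lbox_subset)
qed (use assms in \<open>auto simp: edge_weight_def finite_lbox_closure\<close>)

lemma boundary_current_eq:
  assumes b: "b \<in> lbox_bdry d lo hi" and lohi: "\<forall>i<d. lo i \<le> hi i"
    and q: "q \<in> lattice_nbrs b" "q \<in> lbox d lo hi"
  shows "boundary_current d lo hi \<gamma> u b = \<gamma> {b, q} * (u q - u b)"
  unfolding boundary_current_def
proof (rule sum.mono_neutral_cong_right[where S = "{q}", simplified])
  have "b \<notin> lbox d lo hi" using b by (rule lbox_bdry_disjoint)
  then show "\<forall>y\<in>lbox_closure d lo hi - {q}. edge_weight d lo hi \<gamma> b y * (u y - u b) = 0"
    using lbox_bdry_unique_nbr[OF b lohi _ _ q] by (auto simp: edge_weight_def)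
qed (use q lbox_subset_closure in \<open>auto simp: edge_weight_def finite_lbox_closure\<close>)

lemma green_lbox:
  assumes "harmonic_in d lo hi \<gamma> u"
  shows "dirichlet_form d lo hi \<gamma> u w =
    -2 * (\<Sum>b\<in>lbox_bdry d lo hi. w b * boundary_current d lo hi \<gamma> u b)"
  unfolding dirichlet_form_def boundary_current_def closure_minus_lbox[symmetric]
  by (rule green_identity[OF finite_lbox_closure lbox_subset_closure edge_weight_commute])
    (use assms in \<open>simp add: harmonic_in_def laplacian_def sum_edge_weight_lbox\<close>)

lemma dirichlet_form_commute: "dirichlet_form d lo hi \<gamma> u w = dirichlet_form d lo hi \<gamma> w u"
  unfolding dirichlet_form_def by (simp add: algebra_simps)

lemma harmonic_in_zero_bdry:
  assumes pos: "pos_conductivity d lo hi \<gamma>" and d0: "0 < d"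
    and w: "harmonic_in d lo hi \<gamma> w" and w0: "\<forall>b\<in>lbox_bdry d lo hi. w b = 0"
    and x: "x \<in> lbox d lo hi"
  shows "w x = 0"
proof -
  let ?C = "lbox_closure d lo hi"
  let ?E = "\<lambda>p q. edge_weight d lo hi \<gamma> p q * (w p - w q) * (w p - w q)"
  have nonneg: "0 \<le> ?E p q" for p q
    using edge_weight_nonneg[OF pos] by (simp add: mult.assoc)
  have "(\<Sum>p\<in>?C. \<Sum>q\<in>?C. ?E p q) = 0"
    using green_lbox[OF w, of w] w0 by (simp add: dirichlet_form_def)
  then have "\<forall>p\<in>?C. \<forall>q\<in>?C. ?E p q = 0"
    by (simp add: sum_nonneg_eq_0_iff finite_lbox_closure sum_nonneg nonneg)
  then have flat: "w y = w x" if "x \<in> lbox d lo hi" "y \<in> lattice_nbrs x" for x y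
    using that lattice_nbrs_closure[OF that(2)] pos_conductivityD[OF pos that(2)]
    by (force simp: edge_weight_def)
  show ?thesis using x
  proof (induction "nat (x!0 - lo 0)" arbitrary: x rule: less_induct)
    case less
    define y where "y = x[0 := x!0 + -1]"
    have len: "length x = d" using less.prems by (simp add: lbox_def)
    have y: "y \<in> lattice_nbrs x" unfolding y_def using len d0 by (intro shift_in_lattice_nbrs) auto
    have "w y = 0"
    proof (cases "y \<in> lbox d lo hi")
      case True
      have "lo 0 \<le> y!0" using True d0 by (auto simp: lbox_def)
      then have "nat (y!0 - lo 0) < nat (x!0 - lo 0)" using len d0 by (simp add: y_def)
      then show ?thesis using less.hyps True by blast
    next
      case False
      then show ?thesis using lattice_nbrs_lbox[OF less.prems y] w0 by (auto simp: lbox_closure_def)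
    qed
    then show ?case using flat[OF less.prems y] by simp
  qed
qed

lemma dirichlet_form_eq_of_cauchy_data_incl:
  assumes R: "cauchy_data_incl d lo hi \<gamma> \<gamma>'"
    and u: "harmonic_in d lo hi \<gamma> u" and v: "harmonic_in d lo hi \<gamma>' v"
  shows "dirichlet_form d lo hi \<gamma> u v = dirichlet_form d lo hi \<gamma>' u v"
proof -
  obtain u' where u': "harmonic_in d lo hi \<gamma>' u'"
    "\<forall>b\<in>lbox_bdry d lo hi. u' b = u b \<and> boundary_current d lo hi \<gamma>' u' b = boundary_current d lo hi \<gamma> u b"
    using R u unfolding cauchy_data_incl_def by blast
  have "dirichlet_form d lo hi \<gamma> u v = dirichlet_form d lo hi \<gamma>' u' v"
    using u'(2) by (simp add: green_lbox[OF u] green_lbox[OF u'(1)])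
  also have "\<dots> = dirichlet_form d lo hi \<gamma>' v u'"
    by (rule dirichlet_form_commute)
  also have "\<dots> = dirichlet_form d lo hi \<gamma>' v u"
    using u'(2) by (simp add: green_lbox[OF v])
  also have "\<dots> = dirichlet_form d lo hi \<gamma>' u v"
    by (rule dirichlet_form_commute)
  finally show ?thesis .
qed

text \<open>Comparing the Dirichlet forms of a \<open>\<gamma>\<close>-harmonic \<open>u\<close> and a \<open>\<gamma>'\<close>-harmonic \<open>v\<close>
  (Alessandrini's identity) isolates a single edge as soon as it is the only one on which
  \<open>\<gamma> - \<gamma>'\<close>, \<open>du\<close> and \<open>dv\<close> could all be nonzero.\<close>

lemma conductivity_eq_by_test_pair:
  assumes R: "cauchy_data_incl d lo hi \<gamma> \<gamma>'"
    and u: "harmonic_in d lo hi \<gamma> u" and v: "harmonic_in d lo hi \<gamma>' v"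
    and ab: "b \<in> lattice_nbrs a" "a \<in> lbox d lo hi \<or> b \<in> lbox d lo hi"
    and uv: "u a \<noteq> u b" "v a \<noteq> v b"
    and supp: "\<And>p q. q \<in> lattice_nbrs p \<Longrightarrow> p \<in> lbox d lo hi \<or> q \<in> lbox d lo hi \<Longrightarrow>
      \<gamma> {p, q} \<noteq> \<gamma>' {p, q} \<Longrightarrow> u p \<noteq> u q \<Longrightarrow> v p \<noteq> v q \<Longrightarrow> {p, q} = {a, b}"
  shows "\<gamma> {a, b} = \<gamma>' {a, b}"
proof -
  define F where "F p q = (edge_weight d lo hi \<gamma> p q - edge_weight d lo hi \<gamma>' p q) *
    (u p - u q) * (v p - v q)" for p q
  have "(\<Sum>p\<in>lbox_closure d lo hi. \<Sum>q\<in>lbox_closure d lo hi. F p q) =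
      dirichlet_form d lo hi \<gamma> u v - dirichlet_form d lo hi \<gamma>' u v"
    unfolding F_def dirichlet_form_def by (simp add: sum_subtractf[symmetric] algebra_simps)
  also have "\<dots> = 0" using dirichlet_form_eq_of_cauchy_data_incl[OF R u v] by simp
  finally have "(\<Sum>p\<in>lbox_closure d lo hi. \<Sum>q\<in>lbox_closure d lo hi. F p q) = 0" .
  moreover
  have "(\<Sum>p\<in>lbox_closure d lo hi. \<Sum>q\<in>lbox_closure d lo hi. F p q) = F a b + F b a"
  proof (rule double_sum_supported_on_pair[OF finite_lbox_closure lattice_nbrs_closure[OF ab]])
    show "a \<noteq> b" using ab(1) lattice_nbrs_irrefl by blast
    fix p q assume "F p q \<noteq> 0"
    then have "{p, q} = {a, b}"
      using supp by (auto simp: F_def edge_weight_def split: if_splits)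
    then show "(p, q) = (a, b) \<or> (p, q) = (b, a)" by (auto simp: doubleton_eq_iff)
  qed
  moreover have "F a b + F b a = 2 * (\<gamma> {a, b} - \<gamma>' {a, b}) * (u a - u b) * (v a - v b)"
    using ab lattice_nbrs_sym[OF ab(1)]
    by (auto simp: F_def edge_weight_def insert_commute algebra_simps)
  ultimately show ?thesis using uv by simp
qed

text \<open>Solving the Cauchy problem layer by layer in direction \<open>s e\<^sub>j\<close>: the value at \<open>p\<close> on
  layer \<open>k + 1\<close> is the one that makes \<open>u\<close> harmonic at the point \<open>z = p - s e\<^sub>j\<close> below it.\<close>

definition continue_layer :: "(int list set \<Rightarrow> real) \<Rightarrow> int list set \<Rightarrow> nat \<Rightarrow> int \<Rightarrow> int \<Rightarrow>
    (int list \<Rightarrow> real) \<Rightarrow> int list \<Rightarrow> real" where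
  "continue_layer \<gamma> B j s k u p =
     (let z = p[j := p!j - s] in
      if s * p!j = k + 1 \<and> z \<in> B
      then u z - (\<Sum>y\<in>lattice_nbrs z - {p}. \<gamma> {z, y} * (u y - u z)) / \<gamma> {z, p}
      else u p)"

primrec layer_continuation :: "(int list set \<Rightarrow> real) \<Rightarrow> int list set \<Rightarrow> nat \<Rightarrow> int \<Rightarrow> int \<Rightarrow>
    (int list \<Rightarrow> real) \<Rightarrow> nat \<Rightarrow> int list \<Rightarrow> real" where
  "layer_continuation \<gamma> B j s k g 0 = g"
| "layer_continuation \<gamma> B j s k g (Suc m) =
     continue_layer \<gamma> B j s (k + int m) (layer_continuation \<gamma> B j s k g m)"

lemma continue_layer_below: "s * p!j \<le> k \<Longrightarrow> continue_layer \<gamma> B j s k u p = u p"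
  unfolding continue_layer_def Let_def by simp

lemma laplacian_continue_layer:
  assumes s: "s = 1 \<or> s = -1" and j: "j < d" and pos: "pos_conductivity d lo hi \<gamma>"
    and x: "x \<in> lbox d lo hi" "s * x!j \<le> k"
    and harm: "s * x!j < k \<Longrightarrow> laplacian \<gamma> u x = 0"
  shows "laplacian \<gamma> (continue_layer \<gamma> (lbox d lo hi) j s k u) x = 0"
proof (cases "s * x!j < k")
  case True
  have "s * y!j \<le> k" if "y \<in> lattice_nbrs x" for y
    using lattice_nbrs_coord_diff[OF that, of j] True s by auto
  then have "laplacian \<gamma> (continue_layer \<gamma> (lbox d lo hi) j s k u) x = laplacian \<gamma> u x"
    unfolding laplacian_def using x(2) by (simp add: continue_layer_below)
  then show ?thesis using harm True by simp
next
  case False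
  let ?v = "continue_layer \<gamma> (lbox d lo hi) j s k u"
  define p where "p = x[j := x!j + s]"
  define S where "S = (\<Sum>y\<in>lattice_nbrs x - {p}. \<gamma> {x, y} * (u y - u x))"
  have len: "length x = d" using x by (simp add: lbox_def)
  have p: "p \<in> lattice_nbrs x" unfolding p_def using len j s by (intro shift_in_lattice_nbrs) auto
  have "p!j = x!j + s" using len j by (simp add: p_def)
  then have "s * p!j = k + 1" "p[j := p!j - s] = x"
    using False x(2) s by (auto simp: p_def algebra_simps)
  then have vp: "?v p = u x - S / \<gamma> {x, p}"
    using x(1) by (simp add: continue_layer_def S_def)
  have "?v y = u y" if "y \<in> lattice_nbrs x - {p}" for y
    using lattice_nbrs_other_coord[of y x j s] that s x(2) by (auto simp: p_def continue_layer_below)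
  then have "(\<Sum>y\<in>lattice_nbrs x - {p}. \<gamma> {x, y} * (?v y - ?v x)) = S"
    unfolding S_def using x(2) by (simp add: continue_layer_below)
  moreover have "0 < \<gamma> {x, p}" using pos_conductivityD[OF pos p] x(1) by blast
  ultimately show ?thesis
    using laplacian_remove[OF p, of \<gamma> ?v] vp x(2) by (simp add: continue_layer_below)
qed

lemma harmonic_continuation:
  assumes j: "j < d" and s: "s = 1 \<or> s = -1" and pos: "pos_conductivity d lo hi \<gamma>"
    and g: "\<forall>x\<in>lbox d lo hi. s * x!j < k \<longrightarrow> laplacian \<gamma> g x = 0"
  obtains u where "harmonic_in d lo hi \<gamma> u" "\<forall>p. s * p!j \<le> k \<longrightarrow> u p = g p"
proof -
  let ?U = "layer_continuation \<gamma> (lbox d lo hi) j s k g"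
  have inv: "(\<forall>p. s * p!j \<le> k \<longrightarrow> ?U m p = g p) \<and>
    (\<forall>x\<in>lbox d lo hi. s * x!j < k + int m \<longrightarrow> laplacian \<gamma> (?U m) x = 0)" for m
  proof (induction m)
    case (Suc m)
    then show ?case
      using laplacian_continue_layer[OF s j pos, of _ "k + int m" "?U m"]
      by (auto simp: continue_layer_below)
  qed (use g in simp)
  define M where "M = nat (\<bar>lo j\<bar> + \<bar>hi j\<bar> + 1 - k)"
  have "s * x!j < k + int M" if "x \<in> lbox d lo hi" for x
    using that j s by (auto simp: lbox_def M_def)
  then have "harmonic_in d lo hi \<gamma> (?U M)"
    using inv unfolding harmonic_in_def by blast
  then show ?thesis using inv that by blast
qed

lemma harmonic_continuation_delta:
  assumes pos: "pos_conductivity d lo hi \<gamma>" and lohi: "\<forall>i<d. lo i \<le> hi i"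
    and c: "c \<in> lbox_bdry d lo hi" and j: "j < d" "lo j \<le> c!j" "c!j \<le> hi j"
    and s: "s = 1 \<or> s = -1"
  obtains u where "harmonic_in d lo hi \<gamma> u"
    "\<forall>p. s * p!j \<le> s * c!j \<longrightarrow> u p = (if p = c then 1 else 0)"
proof (rule harmonic_continuation[OF j(1) s pos])
  show "\<forall>x\<in>lbox d lo hi. s * x!j < s * c!j \<longrightarrow> laplacian \<gamma> (\<lambda>p. if p = c then 1 else 0) x = 0"
  proof (intro ballI impI)
    fix x assume x: "x \<in> lbox d lo hi" "s * x!j < s * c!j"
    have "c \<notin> lattice_nbrs x"
      using lbox_bdry_nbr_coord[OF c lohi lattice_nbrs_sym x(1) j(2,3)] x(2) by auto
    moreover have "x \<noteq> c" using c x(1) lbox_bdry_disjoint by blast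
    ultimately show "laplacian \<gamma> (\<lambda>p. if p = c then 1 else 0) x = 0"
      unfolding laplacian_def by (intro sum.neutral) auto
  qed
qed

text \<open>Continuing the boundary delta at \<open>c\<close> across the layer of its inner neighbour \<open>x\<close>:
  harmonicity at the points of that layer forces the next layer to vanish except right
  above \<open>x\<close>, where the value is \<open>-\<gamma>{x,c} / \<gamma>{x, x + s e\<^sub>l}\<close>.\<close>

lemma delta_continuation_next_layer:
  assumes pos: "pos_conductivity d lo hi \<gamma>" and lohi: "\<forall>i<d. lo i \<le> hi i"
    and s: "s = 1 \<or> s = -1" and l: "l < d"
    and c: "c \<in> lbox_bdry d lo hi" and x: "x \<in> lbox d lo hi" "x \<in> lattice_nbrs c" "c!l = x!l"
    and u: "harmonic_in d lo hi \<gamma> u" "\<forall>p. s * p!l \<le> s * x!l \<longrightarrow> u p = (if p = c then 1 else 0)"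
    and p: "p \<in> lbox d lo hi" "s * p!l = s * x!l + 1"
  shows "u p \<noteq> 0 \<longleftrightarrow> p = x[l := x!l + s]"
proof -
  define z where "z = p[l := p!l - s]"
  have lenp: "length p = d" using p by (simp add: lbox_def)
  have zl: "z!l = x!l" using p(2) s lenp l by (auto simp: z_def)
  have z: "z \<in> lbox d lo hi"
    using p(1) x(1) l zl by (auto simp: lbox_def z_def nth_list_update)
  have pz: "p = z[l := z!l + s]" using lenp l by (simp add: z_def)
  have pnb: "p \<in> lattice_nbrs z" using pz lenp l s by (simp add: shift_in_lattice_nbrs)
  have zc: "c \<in> lattice_nbrs z \<longleftrightarrow> z = x"
    using lbox_bdry_unique_nbr[OF c lohi _ z x(2,1)] lattice_nbrs_sym x(2) by blast
  have cp: "c \<noteq> p" using c p(1) lbox_bdry_disjoint by blast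
  have uz: "u z = 0" using u(2) zl z c lbox_bdry_disjoint by fastforce
  have "u w = (if w = c then 1 else 0)" if "w \<in> lattice_nbrs z - {p}" for w
    using lattice_nbrs_other_coord[of w z l s] that pz s zl u(2) by auto
  then have "(\<Sum>w\<in>lattice_nbrs z - {p}. \<gamma> {z, w} * (u w - u z)) =
      (\<Sum>w\<in>lattice_nbrs z - {p}. if w = c then \<gamma> {z, c} else 0)"
    using uz by (intro sum.cong) auto
  also have "\<dots> = (if z = x then \<gamma> {z, c} else 0)"
    using zc cp by (simp add: sum.delta finite_lattice_nbrs)
  finally have "(\<Sum>w\<in>lattice_nbrs z - {p}. \<gamma> {z, w} * (u w - u z)) = (if z = x then \<gamma> {z, c} else 0)" .
  moreover have "laplacian \<gamma> u z = 0" using u(1) z by (simp add: harmonic_in_def)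
  ultimately have "\<gamma> {z, p} * u p = - (if z = x then \<gamma> {z, c} else 0)"
    using laplacian_remove[OF pnb, of \<gamma> u] uz by simp
  moreover have "0 < \<gamma> {z, p}" using pos_conductivityD[OF pos pnb] z by blast
  moreover have "0 < \<gamma> {z, c}" if "z = x"
    using pos_conductivityD[OF pos lattice_nbrs_sym[OF x(2)]] x(1) that by blast
  moreover have "z = x \<longleftrightarrow> p = x[l := x!l + s]" using pz z_def x(1) l by (auto simp: lbox_def)
  ultimately show ?thesis by (cases "z = x") auto
qed

lemma delta_continuation_support:
  assumes pos: "pos_conductivity d lo hi \<gamma>" and lohi: "\<forall>i<d. lo i \<le> hi i"
    and s: "s = 1 \<or> s = -1" and l: "l < d"
    and c: "c \<in> lbox_bdry d lo hi" and x: "x \<in> lbox d lo hi" "x \<in> lattice_nbrs c" "c!l = x!l"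
    and u: "harmonic_in d lo hi \<gamma> u" "\<forall>p. s * p!l \<le> s * x!l \<longrightarrow> u p = (if p = c then 1 else 0)"
    and p: "p \<in> lbox d lo hi" "u p \<noteq> 0"
  shows "p = x[l := x!l + s] \<or> s * x!l + 2 \<le> s * p!l"
proof -
  have "p \<noteq> c" using p(1) c lbox_bdry_disjoint by blast
  then have "\<not> s * p!l \<le> s * x!l" using p(2) u(2) by auto
  moreover have "p = x[l := x!l + s]" if "s * p!l = s * x!l + 1"
    using delta_continuation_next_layer[OF pos lohi s l c x u p(1) that] p(2) by blast
  ultimately show ?thesis by linarith
qed

lemma lbox_peel_iff:
  assumes "0 < d"
  shows "p \<in> lbox d (lo(0 := lo 0 + 1)) hi \<longleftrightarrow> p \<in> lbox d lo hi \<and> lo 0 + 1 \<le> p!0"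
proof -
  have "(lo(0 := lo 0 + 1)) i \<le> p!i \<longleftrightarrow> lo i \<le> p!i \<and> (i = 0 \<longrightarrow> lo 0 + 1 \<le> p!0)" for i
    by auto
  then show ?thesis using assms unfolding lbox_def by auto
qed

lemma lbox_bdry_peel_iff:
  assumes d0: "0 < d" and lt: "lo 0 < hi 0"
  shows "p \<in> lbox_bdry d (lo(0 := lo 0 + 1)) hi \<longleftrightarrow>
    (p \<in> lbox d lo hi \<and> p!0 = lo 0) \<or> (p \<in> lbox_bdry d lo hi \<and> lo 0 + 1 \<le> p!0)"
    (is "p \<in> lbox_bdry d ?lo' hi \<longleftrightarrow> _")
proof
  assume "p \<in> lbox_bdry d ?lo' hi"
  then obtain i where i: "length p = d" "i < d" "p!i = ?lo' i - 1 \<or> p!i = hi i + 1"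
    "\<forall>l<d. l \<noteq> i \<longrightarrow> ?lo' l \<le> p!l \<and> p!l \<le> hi l"
    unfolding lbox_bdry_def by blast
  have other: "lo l \<le> p!l \<and> p!l \<le> hi l" if "l < d" "l \<noteq> i" for l
    using i(4) that by (cases "l = 0") auto
  show "(p \<in> lbox d lo hi \<and> p!0 = lo 0) \<or> (p \<in> lbox_bdry d lo hi \<and> lo 0 + 1 \<le> p!0)"
  proof (cases "i = 0 \<and> p!0 = lo 0")
    case True
    then have "lo l \<le> p!l \<and> p!l \<le> hi l" if "l < d" for l
      using other[OF that] lt by (cases "l = 0") auto
    then show ?thesis using True i(1) unfolding lbox_def by blast
  next
    case False
    have "(p!i = lo i - 1 \<or> p!i = hi i + 1) \<and> lo 0 + 1 \<le> p!0"
    proof (cases "i = 0")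
      case True
      then show ?thesis using False i(3) lt by auto
    next
      case False
      then show ?thesis using i(3) i(4)[rule_format, of 0] d0 by simp
    qed
    then show ?thesis using i(1,2) other unfolding lbox_bdry_def by blast
  qed
next
  assume "(p \<in> lbox d lo hi \<and> p!0 = lo 0) \<or> (p \<in> lbox_bdry d lo hi \<and> lo 0 + 1 \<le> p!0)"
  then show "p \<in> lbox_bdry d ?lo' hi"
  proof
    assume p: "p \<in> lbox d lo hi \<and> p!0 = lo 0"
    then have "length p = d" "p!0 = ?lo' 0 - 1" "\<forall>l<d. l \<noteq> 0 \<longrightarrow> ?lo' l \<le> p!l \<and> p!l \<le> hi l"
      by (auto simp: lbox_def)
    then show ?thesis using d0 unfolding lbox_bdry_def by blast
  next
    assume p: "p \<in> lbox_bdry d lo hi \<and> lo 0 + 1 \<le> p!0"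
    then obtain i where i: "length p = d" "i < d" "p!i = lo i - 1 \<or> p!i = hi i + 1"
      "\<forall>l<d. l \<noteq> i \<longrightarrow> lo l \<le> p!l \<and> p!l \<le> hi l"
      unfolding lbox_bdry_def by blast
    have "p!i = ?lo' i - 1 \<or> p!i = hi i + 1" using i(3) p by auto
    moreover have "\<forall>l<d. l \<noteq> i \<longrightarrow> ?lo' l \<le> p!l \<and> p!l \<le> hi l" using i(4) p by auto
    ultimately show ?thesis using i(1,2) unfolding lbox_bdry_def by blast
  qed
qed

lemma lower_face_point:
  assumes z: "z \<in> lbox d lo hi" and i: "i < d"
  shows "z[i := lo i - 1] \<in> lbox_bdry d lo hi"
    and "z!i = lo i \<Longrightarrow> z \<in> lattice_nbrs (z[i := lo i - 1])"
proof -
  have len: "length z = d" using z by (simp add: lbox_def)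
  show "z[i := lo i - 1] \<in> lbox_bdry d lo hi"
    using z i len unfolding lbox_def lbox_bdry_def by (intro CollectI conjI exI[of _ i]) auto
  assume "z!i = lo i"
  then have "(z[i := lo i - 1])[i := (z[i := lo i - 1])!i + 1] = z"
    using len i by (metis add_diff_cancel_left' diff_add_cancel list_update_id list_update_overwrite
      nth_list_update_eq)
  then show "z \<in> lattice_nbrs (z[i := lo i - 1])"
    using len i shift_in_lattice_nbrs[of i "z[i := lo i - 1]" 1] by simp
qed

lemma boundary_spike_agree:
  assumes d2: "2 \<le> d" and lohi: "\<forall>i<d. lo i \<le> hi i"
    and pos: "pos_conductivity d lo hi \<gamma>" and pos': "pos_conductivity d lo hi \<gamma>'"
    and R: "cauchy_data_incl d lo hi \<gamma> \<gamma>'"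
    and b: "b \<in> lbox_bdry d lo hi" and q: "q \<in> lattice_nbrs b" "q \<in> lbox d lo hi"
  shows "\<gamma> {b, q} = \<gamma>' {b, q}"
proof -
  obtain i where i: "i < d" "\<forall>l<d. l \<noteq> i \<longrightarrow> lo l \<le> b!l \<and> b!l \<le> hi l"
    by (rule lbox_bdryE[OF b lohi]) blast
  define j where "j = (if i = 0 then 1 else (0::nat))"
  have j: "j < d" "lo j \<le> b!j" "b!j \<le> hi j" using d2 i by (auto simp: j_def)
  obtain u where u: "harmonic_in d lo hi \<gamma> u" "\<forall>p. p!j \<le> b!j \<longrightarrow> u p = (if p = b then 1 else 0)"
    using harmonic_continuation_delta[OF pos lohi b j, of 1] by auto
  obtain v where v: "harmonic_in d lo hi \<gamma>' v" "\<forall>p. b!j \<le> p!j \<longrightarrow> v p = (if p = b then 1 else 0)"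
    using harmonic_continuation_delta[OF pos' lohi b j, of "-1"] by auto
  have qj: "q!j = b!j" using lbox_bdry_nbr_coord[OF b lohi q j(2,3)] .
  have bq: "b \<noteq> q" using q(2) b lbox_bdry_disjoint by blast
  show ?thesis
  proof (rule conductivity_eq_by_test_pair[OF R u(1) v(1) q(1)])
    show "b \<in> lbox d lo hi \<or> q \<in> lbox d lo hi" using q(2) by blast
    show "u b \<noteq> u q" "v b \<noteq> v q" using u(2) v(2) qj bq by auto
    fix p r assume pr: "r \<in> lattice_nbrs p" "p \<in> lbox d lo hi \<or> r \<in> lbox d lo hi"
      and uv: "u p \<noteq> u r" "v p \<noteq> v r"
    show "{p, r} = {b, q}"
    proof (cases "b \<in> {p, r}")
      case True
      then show ?thesis
        using lbox_bdry_unique_nbr[OF b lohi _ _ q] lattice_nbrs_sym[OF pr(1)] pr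
          lbox_bdry_disjoint[OF b] by auto
    next
      case False
      then have "b!j < p!j \<or> b!j < r!j" "p!j < b!j \<or> r!j < b!j"
        using u(2)[rule_format, of p] u(2)[rule_format, of r] v(2)[rule_format, of p]
          v(2)[rule_format, of r] uv by (auto simp: not_le[symmetric])
      moreover have "\<bar>p!j - r!j\<bar> \<le> 1" by (rule lattice_nbrs_coord_diff[OF pr(1)])
      ultimately show ?thesis by auto
    qed
  qed
qed

lemma differing_edge_in_lbox:
  assumes d2: "2 \<le> d" and lohi: "\<forall>i<d. lo i \<le> hi i"
    and pos: "pos_conductivity d lo hi \<gamma>" and pos': "pos_conductivity d lo hi \<gamma>'"
    and R: "cauchy_data_incl d lo hi \<gamma> \<gamma>'"
    and pq: "q \<in> lattice_nbrs p" "p \<in> lbox d lo hi \<or> q \<in> lbox d lo hi" "\<gamma> {p, q} \<noteq> \<gamma>' {p, q}"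
  shows "p \<in> lbox d lo hi \<and> q \<in> lbox d lo hi"
proof (rule ccontr)
  assume "\<not> (p \<in> lbox d lo hi \<and> q \<in> lbox d lo hi)"
  then consider "p \<in> lbox_bdry d lo hi" "q \<in> lbox d lo hi" | "q \<in> lbox_bdry d lo hi" "p \<in> lbox d lo hi"
    using pq(1,2) lattice_nbrs_lbox lattice_nbrs_sym unfolding lbox_closure_def by blast
  then show False
  proof cases
    case 1
    then show False using boundary_spike_agree[OF assms(1-5) _ pq(1)] pq(3) by blast
  next
    case 2
    then have "\<gamma> {q, p} = \<gamma>' {q, p}"
      using boundary_spike_agree[OF assms(1-5) _ lattice_nbrs_sym[OF pq(1)]] by blast
    then show False using pq(3) by (simp add: insert_commute)
  qed
qed

lemma face_delta_continuation:
  assumes pos: "pos_conductivity d lo hi \<gamma>" and lohi: "\<forall>i<d. lo i \<le> hi i"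
    and x: "x \<in> lbox d lo hi" "x!0 = lo 0" and l: "0 < l" "l < d" and s: "s = 1 \<or> s = -1"
    and y: "x[l := x!l + s] \<in> lbox d lo hi"
  obtains u where "harmonic_in d lo hi \<gamma> u" "u x = 0" "u (x[l := x!l + s]) \<noteq> 0"
    "\<forall>p\<in>lbox d lo hi. u p \<noteq> 0 \<longrightarrow> p = x[l := x!l + s] \<or> s * x!l + 2 \<le> s * p!l"
proof -
  define c where "c = x[0 := lo 0 - 1]"
  have d0: "0 < d" and len: "length x = d" using l x by (auto simp: lbox_def)
  have c: "c \<in> lbox_bdry d lo hi" "x \<in> lattice_nbrs c"
    unfolding c_def using lower_face_point[OF x(1) d0] x(2) by auto
  have cl: "c!l = x!l" "lo l \<le> c!l" "c!l \<le> hi l"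
    using x(1) l by (auto simp: c_def lbox_def)
  obtain u where u: "harmonic_in d lo hi \<gamma> u"
      "\<forall>p. s * p!l \<le> s * x!l \<longrightarrow> u p = (if p = c then 1 else 0)"
    using harmonic_continuation_delta[OF pos lohi c(1) l(2) cl(2,3) s] cl(1) by metis
  show ?thesis
  proof (rule that[OF u(1)])
    show "u x = 0" using u(2) x(1) c(1) lbox_bdry_disjoint by auto
    have "s * (x[l := x!l + s])!l = s * x!l + 1" using s len l by auto
    then show "u (x[l := x!l + s]) \<noteq> 0"
      using delta_continuation_next_layer[OF pos lohi s l(2) c(1) x(1) c(2) cl(1) u y] by simp
    show "\<forall>p\<in>lbox d lo hi. u p \<noteq> 0 \<longrightarrow> p = x[l := x!l + s] \<or> s * x!l + 2 \<le> s * p!l"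
      using delta_continuation_support[OF pos lohi s l(2) c(1) x(1) c(2) cl(1) u] by blast
  qed
qed

lemma face_edge_shift_agree:
  assumes d2: "2 \<le> d" and lohi: "\<forall>i<d. lo i \<le> hi i"
    and pos: "pos_conductivity d lo hi \<gamma>" and pos': "pos_conductivity d lo hi \<gamma>'"
    and R: "cauchy_data_incl d lo hi \<gamma> \<gamma>'"
    and x: "x \<in> lbox d lo hi" "x!0 = lo 0" and l: "0 < l" "l < d"
    and y: "y = x[l := x!l + 1]" "y \<in> lbox d lo hi"
  shows "\<gamma> {x, y} = \<gamma>' {x, y}"
proof -
  have len: "length x = d" using x by (simp add: lbox_def)
  have yl: "y!l = x!l + 1" and xy: "y[l := y!l + -1] = x" and y0: "y!0 = lo 0"
    using y(1) x(2) len l by auto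
  obtain u where u: "harmonic_in d lo hi \<gamma> u" "u x = 0" "u y \<noteq> 0"
      "\<forall>p\<in>lbox d lo hi. u p \<noteq> 0 \<longrightarrow> p = y \<or> x!l + 2 \<le> p!l"
    using face_delta_continuation[OF pos lohi x l, of 1] y by auto
  obtain v where v: "harmonic_in d lo hi \<gamma>' v" "v y = 0" "v x \<noteq> 0"
      "\<forall>p\<in>lbox d lo hi. v p \<noteq> 0 \<longrightarrow> p = x \<or> 2 - y!l \<le> - p!l"
    using face_delta_continuation[OF pos' lohi y(2) y0 l, of "-1"] x(1) xy by auto
  have u_supp: "p = y \<or> x!l + 2 \<le> p!l" if "p \<in> lbox d lo hi" "u p \<noteq> 0" for p
    using u(4) that by blast
  have v_supp: "p = x \<or> p!l \<le> x!l - 1" if "p \<in> lbox d lo hi" "v p \<noteq> 0" for p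
    using v(4) that yl by auto
  have "y \<in> lattice_nbrs x" using y(1) len l by (simp add: shift_in_lattice_nbrs)
  then show ?thesis
  proof (rule conductivity_eq_by_test_pair[OF R u(1) v(1)])
    show "x \<in> lbox d lo hi \<or> y \<in> lbox d lo hi" "u x \<noteq> u y" "v x \<noteq> v y"
      using x(1) u(2,3) v(2,3) y(1) xy by auto
    fix p r assume pr: "r \<in> lattice_nbrs p" "p \<in> lbox d lo hi \<or> r \<in> lbox d lo hi"
      and "\<gamma> {p, r} \<noteq> \<gamma>' {p, r}" and uv: "u p \<noteq> u r" "v p \<noteq> v r"
    then have "p \<in> lbox d lo hi" "r \<in> lbox d lo hi"
      using differing_edge_in_lbox[OF d2 lohi pos pos' R] by blast+
    then have "p = y \<or> x!l + 2 \<le> p!l \<or> r = y \<or> x!l + 2 \<le> r!l"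
      "p = x \<or> p!l \<le> x!l - 1 \<or> r = x \<or> r!l \<le> x!l - 1"
      using u_supp v_supp uv by metis+
    moreover have "\<bar>p!l - r!l\<bar> \<le> 1" "p \<noteq> r"
      using lattice_nbrs_coord_diff[OF pr(1)] lattice_nbrs_irrefl pr(1) by blast+
    ultimately show "{p, r} = {x, y}" using yl by auto
  qed
qed

lemma face_edges_agree:
  assumes d2: "2 \<le> d" and lohi: "\<forall>i<d. lo i \<le> hi i"
    and pos: "pos_conductivity d lo hi \<gamma>" and pos': "pos_conductivity d lo hi \<gamma>'"
    and R: "cauchy_data_incl d lo hi \<gamma> \<gamma>'"
    and p: "p \<in> lbox d lo hi" "p!0 = lo 0" and q: "q \<in> lbox d lo hi" "q!0 = lo 0"
    and pq: "q \<in> lattice_nbrs p"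
  shows "\<gamma> {p, q} = \<gamma>' {p, q}"
proof -
  note face = face_edge_shift_agree[OF d2 lohi pos pos' R]
  obtain l t where lt: "l < length p" "t = 1 \<or> t = -1" "q = p[l := p!l + t]"
    using pq by (auto simp: lattice_nbrs_iff)
  have "l \<noteq> 0"
  proof
    assume "l = 0"
    then have "q!0 = p!0 + t" using lt by simp
    then show False using p(2) q(2) lt(2) by auto
  qed
  then have l: "0 < l" "l < d" using lt(1) p(1) by (auto simp: lbox_def)
  from lt(2) show ?thesis
  proof
    assume "t = 1"
    then show ?thesis using face[OF p l _ q(1)] lt(3) by simp
  next
    assume "t = -1"
    then have "p = q[l := q!l + 1]" using lt by simp
    then show ?thesis using face[OF q l _ p(1)] by (simp add: insert_commute)
  qed
qed

lemma edges_outside_peel_agree: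
  assumes d2: "2 \<le> d" and lohi: "\<forall>i<d. lo i \<le> hi i"
    and pos: "pos_conductivity d lo hi \<gamma>" and pos': "pos_conductivity d lo hi \<gamma>'"
    and R: "cauchy_data_incl d lo hi \<gamma> \<gamma>'"
    and pq: "q \<in> lattice_nbrs p" "p \<in> lbox d lo hi \<or> q \<in> lbox d lo hi"
    and outside: "p \<notin> lbox d (lo(0 := lo 0 + 1)) hi" "q \<notin> lbox d (lo(0 := lo 0 + 1)) hi"
  shows "\<gamma> {p, q} = \<gamma>' {p, q}"
proof (rule ccontr)
  assume ne: "\<gamma> {p, q} \<noteq> \<gamma>' {p, q}"
  then have box: "p \<in> lbox d lo hi" "q \<in> lbox d lo hi"
    using differing_edge_in_lbox[OF assms(1-5) pq] by blast+
  have "0 < d" using d2 by simp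
  then have "lo 0 \<le> p!0" "lo 0 \<le> q!0" using box by (auto simp: lbox_def)
  moreover have "\<not> lo 0 + 1 \<le> p!0" "\<not> lo 0 + 1 \<le> q!0"
    using box outside lbox_peel_iff[OF \<open>0 < d\<close>] by blast+
  ultimately have "p!0 = lo 0" "q!0 = lo 0" by simp_all
  then show False using face_edges_agree[OF assms(1-5) box(1) _ box(2) _ pq(1)] ne by blast
qed

lemma pos_conductivity_mono:
  "lbox d lo' hi' \<subseteq> lbox d lo hi \<Longrightarrow> pos_conductivity d lo hi \<gamma> \<Longrightarrow> pos_conductivity d lo' hi' \<gamma>"
  unfolding pos_conductivity_def by blast

lemma face_values_eq_of_cauchy_data:
  assumes d0: "0 < d" and lohi: "\<forall>i<d. lo i \<le> hi i" and pos: "pos_conductivity d lo hi \<gamma>"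
    and cd: "\<forall>b\<in>lbox_bdry d lo hi. W b = U b \<and>
      boundary_current d lo hi \<gamma>' W b = boundary_current d lo hi \<gamma> U b"
    and outside: "\<And>p q. q \<in> lattice_nbrs p \<Longrightarrow> p \<in> lbox d lo hi \<or> q \<in> lbox d lo hi \<Longrightarrow>
      p \<notin> lbox d (lo(0 := lo 0 + 1)) hi \<Longrightarrow> q \<notin> lbox d (lo(0 := lo 0 + 1)) hi \<Longrightarrow>
      \<gamma> {p, q} = \<gamma>' {p, q}"
    and z: "z \<in> lbox d lo hi" "z!0 = lo 0"
  shows "W z = U z"
proof -
  define b where "b = z[0 := lo 0 - 1]"
  have b: "b \<in> lbox_bdry d lo hi" "z \<in> lattice_nbrs b"
    unfolding b_def using lower_face_point[OF z(1) d0] z(2) by auto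
  then have "b \<notin> lbox d (lo(0 := lo 0 + 1)) hi" "z \<notin> lbox d (lo(0 := lo 0 + 1)) hi"
    using lbox_bdry_disjoint z(2) lbox_peel_iff[OF d0] by auto
  then have "\<gamma>' {b, z} = \<gamma> {b, z}" using outside[OF b(2)] z(1) by simp
  moreover have "0 < \<gamma> {b, z}" using pos_conductivityD[OF pos b(2)] z(1) by blast
  ultimately show ?thesis using cd b(1) boundary_current_eq[OF b(1) lohi b(2) z(1)] by auto
qed

lemma harmonic_extension_below_face:
  assumes d0: "0 < d" and lt: "lo 0 < hi 0" and pos: "pos_conductivity d lo hi \<gamma>"
    and u: "harmonic_in d (lo(0 := lo 0 + 1)) hi \<gamma> u"
  obtains U where "harmonic_in d lo hi \<gamma> U" "\<forall>p\<in>lbox_closure d (lo(0 := lo 0 + 1)) hi. U p = u p"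
proof -
  let ?C = "lbox_closure d (lo(0 := lo 0 + 1)) hi"
  define g where "g p = (if p \<in> ?C then u p else 0)" for p
  obtain U where U: "harmonic_in d lo hi \<gamma> U" "\<forall>p. -1 * p!0 \<le> - lo 0 \<longrightarrow> U p = g p"
  proof (rule harmonic_continuation[OF d0 _ pos])
    show "\<forall>x\<in>lbox d lo hi. -1 * x!0 < - lo 0 \<longrightarrow> laplacian \<gamma> g x = 0"
    proof (intro ballI impI)
      fix x assume "x \<in> lbox d lo hi" "-1 * x!0 < - lo 0"
      then have x: "x \<in> lbox d (lo(0 := lo 0 + 1)) hi" using lbox_peel_iff[OF d0] by simp
      moreover have "x \<in> ?C" using x lbox_subset_closure by blast
      ultimately have "laplacian \<gamma> g x = laplacian \<gamma> u x"
        using lattice_nbrs_lbox_subset[OF x] unfolding laplacian_def g_def by (intro sum.cong) auto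
      then show "laplacian \<gamma> g x = 0" using u x by (simp add: harmonic_in_def)
    qed
  qed auto
  have "lo 0 \<le> p!0" if "p \<in> ?C" for p
    using that lbox_peel_iff[OF d0] lbox_bdry_peel_iff[where lo = lo and hi = hi, OF d0 lt] d0
    by (auto simp: lbox_closure_def lbox_def)
  then have "\<forall>p\<in>?C. U p = u p" using U(2) by (simp add: g_def)
  with U(1) show ?thesis by (rule that)
qed

text \<open>At a point \<open>b\<close> of the face \<open>x\<^sub>0 = lo 0\<close>, which lies on the boundary of the peeled box,
  harmonicity in the full box expresses the current through the edge to \<open>b + e\<^sub>0\<close> by the
  currents through all other edges at \<open>b\<close>, whose conductivities are already known.\<close>

lemma boundary_current_peel_face:
  assumes d0: "0 < d" and lohi: "\<forall>i<d. lo i \<le> hi i" and lt: "lo 0 < hi 0"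
    and U: "harmonic_in d lo hi \<gamma> U" and W: "harmonic_in d lo hi \<gamma>' W"
    and WU: "\<And>p. p \<in> lbox_bdry d lo hi \<or> (p \<in> lbox d lo hi \<and> p!0 = lo 0) \<Longrightarrow> W p = U p"
    and outside: "\<And>p q. q \<in> lattice_nbrs p \<Longrightarrow> p \<in> lbox d lo hi \<or> q \<in> lbox d lo hi \<Longrightarrow>
      p \<notin> lbox d (lo(0 := lo 0 + 1)) hi \<Longrightarrow> q \<notin> lbox d (lo(0 := lo 0 + 1)) hi \<Longrightarrow>
      \<gamma> {p, q} = \<gamma>' {p, q}"
    and b: "b \<in> lbox d lo hi" "b!0 = lo 0"
  shows "boundary_current d (lo(0 := lo 0 + 1)) hi \<gamma>' W b =
    boundary_current d (lo(0 := lo 0 + 1)) hi \<gamma> U b"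
proof -
  let ?lo' = "lo(0 := lo 0 + 1)"
  define bp where "bp = b[0 := b!0 + 1]"
  have len: "length b = d" using b by (simp add: lbox_def)
  have bp: "bp \<in> lattice_nbrs b" unfolding bp_def using len d0 by (intro shift_in_lattice_nbrs) auto
  have "bp!0 = lo 0 + 1" using b(2) len d0 by (simp add: bp_def)
  then have bp': "bp \<in> lbox d ?lo' hi"
    using b(1) lt d0 by (auto simp: lbox_def bp_def nth_list_update)
  have b': "b \<in> lbox_bdry d ?lo' hi" "\<forall>i<d. ?lo' i \<le> hi i"
    using b lbox_bdry_peel_iff[where lo = lo and hi = hi, OF d0 lt] lohi lt by auto
  have b_out: "b \<notin> lbox d ?lo' hi" using b'(1) lbox_bdry_disjoint by blast
  have "(\<Sum>w\<in>lattice_nbrs b - {bp}. \<gamma>' {b, w} * (W w - W b)) =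
      (\<Sum>w\<in>lattice_nbrs b - {bp}. \<gamma> {b, w} * (U w - U b))"
  proof (intro sum.cong refl)
    fix w assume w: "w \<in> lattice_nbrs b - {bp}"
    then have "w!0 \<le> b!0" using lattice_nbrs_other_coord[of w b 0 1] by (simp add: bp_def)
    then have "w \<notin> lbox d ?lo' hi" using b(2) lbox_peel_iff[OF d0] by auto
    moreover have "w \<in> lbox_bdry d lo hi \<or> (w \<in> lbox d lo hi \<and> w!0 = lo 0)"
      using lattice_nbrs_lbox[OF b(1)] w \<open>w!0 \<le> b!0\<close> b(2) d0
      by (fastforce simp: lbox_closure_def lbox_def)
    ultimately show "\<gamma>' {b, w} * (W w - W b) = \<gamma> {b, w} * (U w - U b)"
      using outside[of w b] WU[of w] WU[of b] w b b_out by auto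
  qed
  moreover have "laplacian \<gamma> U b = 0" "laplacian \<gamma>' W b = 0"
    using U W b(1) by (simp_all add: harmonic_in_def)
  ultimately have "\<gamma>' {b, bp} * (W bp - W b) = \<gamma> {b, bp} * (U bp - U b)"
    using laplacian_remove[OF bp, of \<gamma> U] laplacian_remove[OF bp, of \<gamma>' W] by simp
  then show ?thesis using boundary_current_eq[OF b' bp bp'] by simp
qed

lemma boundary_current_peel_outer:
  assumes d0: "0 < d" and lohi: "\<forall>i<d. lo i \<le> hi i" and lt: "lo 0 < hi 0"
    and b: "b \<in> lbox_bdry d lo hi" "lo 0 + 1 \<le> b!0"
  shows "boundary_current d (lo(0 := lo 0 + 1)) hi \<gamma> f b = boundary_current d lo hi \<gamma> f b"
proof -
  let ?lo' = "lo(0 := lo 0 + 1)"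
  obtain q where q: "q \<in> lattice_nbrs b" "q \<in> lbox d lo hi" using b(1) lohi by (rule lbox_bdry_ex_nbr)
  have "lo 0 + 1 \<le> q!0"
  proof (cases "b!0 \<le> hi 0")
    case True
    then show ?thesis using lbox_bdry_nbr_coord[OF b(1) lohi q, of 0] b(2) by simp
  next
    case False
    then have "hi 0 + 1 \<le> b!0" by simp
    then show ?thesis using lattice_nbrs_coord_diff[OF q(1), of 0] lt by simp
  qed
  then have q': "q \<in> lbox d ?lo' hi" using q(2) lbox_peel_iff[OF d0] by blast
  have b': "b \<in> lbox_bdry d ?lo' hi" "\<forall>i<d. ?lo' i \<le> hi i"
    using b lbox_bdry_peel_iff[where lo = lo and hi = hi, OF d0 lt] lohi lt by auto
  show ?thesis
    using boundary_current_eq[OF b' q(1) q'] boundary_current_eq[OF b(1) lohi q] by simp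
qed

lemma cauchy_data_incl_peel:
  assumes d0: "0 < d" and lohi: "\<forall>i<d. lo i \<le> hi i" and lt: "lo 0 < hi 0"
    and pos: "pos_conductivity d lo hi \<gamma>" and R: "cauchy_data_incl d lo hi \<gamma> \<gamma>'"
    and outside: "\<And>p q. q \<in> lattice_nbrs p \<Longrightarrow> p \<in> lbox d lo hi \<or> q \<in> lbox d lo hi \<Longrightarrow>
      p \<notin> lbox d (lo(0 := lo 0 + 1)) hi \<Longrightarrow> q \<notin> lbox d (lo(0 := lo 0 + 1)) hi \<Longrightarrow>
      \<gamma> {p, q} = \<gamma>' {p, q}"
  shows "cauchy_data_incl d (lo(0 := lo 0 + 1)) hi \<gamma> \<gamma>'"
  unfolding cauchy_data_incl_def
proof (intro allI impI)
  let ?lo' = "lo(0 := lo 0 + 1)"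
  fix u assume u: "harmonic_in d ?lo' hi \<gamma> u"
  obtain U where U: "harmonic_in d lo hi \<gamma> U" "\<forall>p\<in>lbox_closure d ?lo' hi. U p = u p"
    using harmonic_extension_below_face[OF d0 lt pos u] by blast
  obtain W where W: "harmonic_in d lo hi \<gamma>' W" "\<forall>b\<in>lbox_bdry d lo hi. W b = U b \<and>
      boundary_current d lo hi \<gamma>' W b = boundary_current d lo hi \<gamma> U b"
    using R U(1) unfolding cauchy_data_incl_def by blast
  have WU: "W p = U p" if "p \<in> lbox_bdry d lo hi \<or> (p \<in> lbox d lo hi \<and> p!0 = lo 0)" for p
    using that W(2) face_values_eq_of_cauchy_data[OF d0 lohi pos W(2) outside] by blast
  show "\<exists>u'. harmonic_in d ?lo' hi \<gamma>' u' \<and> (\<forall>b\<in>lbox_bdry d ?lo' hi. u' b = u b \<and>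
      boundary_current d ?lo' hi \<gamma>' u' b = boundary_current d ?lo' hi \<gamma> u b)"
  proof (intro exI[of _ W] conjI ballI)
    show "harmonic_in d ?lo' hi \<gamma>' W" using W(1) lbox_peel_iff[OF d0] by (simp add: harmonic_in_def)
    fix b assume b: "b \<in> lbox_bdry d ?lo' hi"
    then have "b \<in> lbox_closure d ?lo' hi" by (simp add: lbox_closure_def)
    then have Ub: "U b = u b" and
      Uu: "boundary_current d ?lo' hi \<gamma> U b = boundary_current d ?lo' hi \<gamma> u b"
      using U(2) by (auto intro: boundary_current_cong)
    from b have b_cases: "(b \<in> lbox d lo hi \<and> b!0 = lo 0) \<or> (b \<in> lbox_bdry d lo hi \<and> lo 0 + 1 \<le> b!0)"
      using lbox_bdry_peel_iff[where lo = lo and hi = hi, OF d0 lt] by blast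
    then show "W b = u b" using WU[of b] Ub by auto
    from b_cases have "boundary_current d ?lo' hi \<gamma>' W b = boundary_current d ?lo' hi \<gamma> U b"
    proof
      assume "b \<in> lbox d lo hi \<and> b!0 = lo 0"
      then show ?thesis using boundary_current_peel_face[OF d0 lohi lt U(1) W(1) WU outside] by blast
    next
      assume "b \<in> lbox_bdry d lo hi \<and> lo 0 + 1 \<le> b!0"
      then show ?thesis using boundary_current_peel_outer[OF d0 lohi lt] W(2) by simp
    qed
    then show "boundary_current d ?lo' hi \<gamma>' W b = boundary_current d ?lo' hi \<gamma> u b"
      using Uu by simp
  qed
qed

lemma edges_agree_lbox:
  assumes "2 \<le> d" "\<forall>i<d. lo i \<le> hi i"
    and "pos_conductivity d lo hi \<gamma>" "pos_conductivity d lo hi \<gamma>'"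
    and "cauchy_data_incl d lo hi \<gamma> \<gamma>'"
  shows "edges_agree d lo hi \<gamma> \<gamma>'"
  using assms
proof (induction "nat (hi 0 - lo 0)" arbitrary: lo rule: less_induct)
  case less
  let ?lo' = "lo(0 := lo 0 + 1)"
  have d0: "0 < d" using less.prems(1) by simp
  note outside = edges_outside_peel_agree[OF less.prems]
  have "edges_agree d ?lo' hi \<gamma> \<gamma>'"
  proof (cases "lo 0 < hi 0")
    case True
    have "lbox d ?lo' hi \<subseteq> lbox d lo hi" using lbox_peel_iff[OF d0] by blast
    then have "pos_conductivity d ?lo' hi \<gamma>" "pos_conductivity d ?lo' hi \<gamma>'"
      using less.prems(3,4) by (simp_all add: pos_conductivity_mono)
    moreover have "cauchy_data_incl d ?lo' hi \<gamma> \<gamma>'"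
      using cauchy_data_incl_peel[OF d0 less.prems(2) True less.prems(3,5)] outside by blast
    moreover have "\<forall>i<d. ?lo' i \<le> hi i" "nat (hi 0 - ?lo' 0) < nat (hi 0 - lo 0)"
      using less.prems(2) True by auto
    ultimately show ?thesis using less.hyps less.prems(1) by blast
  next
    case False
    then have "lbox d ?lo' hi = {}" using lbox_peel_iff[OF d0] d0 by (force simp: lbox_def)
    then show ?thesis by (simp add: edges_agree_def)
  qed
  then show ?case using outside unfolding edges_agree_def by blast
qed

lemma l1dist_eq_1_iff:
  assumes len: "length b = length a"
  shows "l1dist a b = 1 \<longleftrightarrow> b \<in> lattice_nbrs a"
proof
  assume "b \<in> lattice_nbrs a"
  then obtain i t where it: "i < length a" "t = 1 \<or> t = -1" "b = a[i := a!i + t]"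
    by (auto simp: lattice_nbrs_iff)
  have "l1dist a b = (\<Sum>l<length a. if l = i then 1 else 0)"
    unfolding l1dist_def using it by (intro sum.cong) (auto simp: nth_list_update)
  then show "l1dist a b = 1" using it(1) by simp
next
  assume e: "l1dist a b = 1"
  then have "a \<noteq> b" by (auto simp: l1dist_def)
  then obtain i where i: "i < length a" "a!i \<noteq> b!i" using len nth_equalityI by metis
  have split: "l1dist a b = \<bar>a!i - b!i\<bar> + (\<Sum>l\<in>{..<length a} - {i}. \<bar>a!l - b!l\<bar>)"
    unfolding l1dist_def using i(1) by (simp add: sum.remove)
  moreover have "0 \<le> (\<Sum>l\<in>{..<length a} - {i}. \<bar>a!l - b!l\<bar>)" by (simp add: sum_nonneg)
  ultimately have ai: "\<bar>a!i - b!i\<bar> = 1" using e i(2) by linarith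
  then have "(\<Sum>l\<in>{..<length a} - {i}. \<bar>a!l - b!l\<bar>) = 0" using e split by simp
  then have other: "a!l = b!l" if "l < length a" "l \<noteq> i" for l
    using that by (subst (asm) sum_nonneg_eq_0_iff) auto
  have "b = a[i := a!i + (b!i - a!i)]"
  proof (rule nth_equalityI)
    fix l assume "l < length b"
    then show "b!l = a[i := a!i + (b!i - a!i)]!l" using len other by (cases "l = i") auto
  qed (use len in simp)
  moreover have "b!i - a!i = 1 \<or> b!i - a!i = -1" using ai by auto
  ultimately show "b \<in> lattice_nbrs a" using shift_in_lattice_nbrs[OF i(1)] by metis
qed

lemma Dom_eq_lbox: "Dom d n = lbox d (\<lambda>_. 1) (\<lambda>_. int n)"
  unfolding Dom_def lbox_def by simp

lemma Bdry_eq_lbox_bdry: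
  assumes n: "1 \<le> n"
  shows "Bdry d n = lbox_bdry d (\<lambda>_. 1) (\<lambda>_. int n)"
proof (intro set_eqI iffI)
  have lohi: "\<forall>i<d. (\<lambda>_. 1) i \<le> (\<lambda>_. int n) i" using n by simp
  fix p
  assume p: "p \<in> Bdry d n"
  then obtain q where q: "q \<in> Dom d n" "l1dist p q = 1" and len: "length p = d"
    and far: "\<forall>q\<in>Dom d n. 1 \<le> l1dist p q" unfolding Bdry_def by blast
  have "q \<in> lattice_nbrs p" using q len l1dist_eq_1_iff[of q p] by (simp add: Dom_def)
  then have "p \<in> lbox_closure d (\<lambda>_. 1) (\<lambda>_. int n)"
    using lattice_nbrs_lbox[of q] lattice_nbrs_sym q(1) by (simp add: Dom_eq_lbox)
  moreover have "p \<notin> Dom d n" using far by (force simp: l1dist_def)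
  ultimately show "p \<in> lbox_bdry d (\<lambda>_. 1) (\<lambda>_. int n)" by (simp add: lbox_closure_def Dom_eq_lbox)
next
  have lohi: "\<forall>i<d. (\<lambda>_. 1) i \<le> (\<lambda>_. int n) i" using n by simp
  fix p assume p: "p \<in> lbox_bdry d (\<lambda>_. 1) (\<lambda>_. int n)"
  obtain q where q: "q \<in> lattice_nbrs p" "q \<in> Dom d n"
    using p lohi unfolding Dom_eq_lbox by (rule lbox_bdry_ex_nbr)
  obtain i where i: "i < d" "p!i < 1 \<or> int n < p!i" "length p = d"
    by (rule lbox_bdryE[OF p lohi]) blast
  have "1 \<le> l1dist p q'" if q': "q' \<in> Dom d n" for q'
  proof -
    have "1 \<le> \<bar>p!i - q'!i\<bar>" using q' i by (auto simp: Dom_def)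
    also have "\<bar>p!i - q'!i\<bar> \<le> l1dist p q'"
      unfolding l1dist_def by (rule member_le_sum) (use i in auto)
    finally show ?thesis .
  qed
  moreover have "l1dist p q = 1" using q length_lattice_nbrs l1dist_eq_1_iff by metis
  ultimately show "p \<in> Bdry d n" using q(2) i(3) unfolding Bdry_def by blast
qed

lemma Dom_Un_Bdry_eq: "1 \<le> n \<Longrightarrow> Dom d n \<union> Bdry d n = lbox_closure d (\<lambda>_. 1) (\<lambda>_. int n)"
  by (simp add: Dom_eq_lbox Bdry_eq_lbox_bdry lbox_closure_def)

lemma Edges_iff:
  assumes n: "1 \<le> n"
  shows "{a, b} \<in> Edges d n \<longleftrightarrow>
    b \<in> lattice_nbrs a \<and> (a \<in> lbox d (\<lambda>_. 1) (\<lambda>_. int n) \<or> b \<in> lbox d (\<lambda>_. 1) (\<lambda>_. int n))"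
    (is "_ \<longleftrightarrow> ?E a b")
proof -
  let ?B = "lbox_bdry d (\<lambda>_. 1) (\<lambda>_. int n)"
  let ?C = "lbox d (\<lambda>_. 1) (\<lambda>_. int n) \<union> ?B"
  have E: "?E p q \<longleftrightarrow> p \<in> ?C \<and> q \<in> ?C \<and> l1dist p q = 1 \<and> \<not> {p, q} \<subseteq> ?B" for p q
  proof
    assume pq: "?E p q"
    then show "p \<in> ?C \<and> q \<in> ?C \<and> l1dist p q = 1 \<and> \<not> {p, q} \<subseteq> ?B"
      using lattice_nbrs_closure[of q p] l1dist_eq_1_iff[of q p] length_lattice_nbrs[of q p]
        lbox_bdry_disjoint by (auto simp: lbox_closure_def)
  next
    assume pq: "p \<in> ?C \<and> q \<in> ?C \<and> l1dist p q = 1 \<and> \<not> {p, q} \<subseteq> ?B"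
    then have "q \<in> lattice_nbrs p"
      using l1dist_eq_1_iff[of q p] length_lbox_closure unfolding lbox_closure_def by metis
    then show "?E p q" using pq by auto
  qed
  have "?E a b \<longleftrightarrow> ?E b a" using lattice_nbrs_sym by blast
  then show ?thesis
    unfolding Edges_def Dom_eq_lbox Bdry_eq_lbox_bdry[OF n] E[symmetric]
    by (auto simp: doubleton_eq_iff)
qed

lemma Nbr_eq_lattice_nbrs:
  "1 \<le> n \<Longrightarrow> p \<in> Dom d n \<Longrightarrow> Nbr d n p = lattice_nbrs p"
  unfolding Nbr_def Edges_iff Dom_eq_lbox by auto

lemma bnbr_eq:
  assumes n: "1 \<le> n" and b: "b \<in> Bdry d n" and q: "q \<in> lattice_nbrs b" "q \<in> Dom d n"
  shows "bnbr d n b = q"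
proof -
  have lohi: "\<forall>i<d. (\<lambda>_. 1) i \<le> (\<lambda>_. int n) i" using n by simp
  have b': "b \<in> lbox_bdry d (\<lambda>_. 1) (\<lambda>_. int n)" using b Bdry_eq_lbox_bdry[OF n] by blast
  then have "Nbr d n b = {q}"
    using q lbox_bdry_disjoint[OF b'] lbox_bdry_unique_nbr[OF b' lohi _ _ q[unfolded Dom_eq_lbox]]
    unfolding Nbr_def Edges_iff[OF n] Dom_eq_lbox by blast
  then show ?thesis unfolding bnbr_def by simp
qed

lemma harmonic_iff_harmonic_in:
  "1 \<le> n \<Longrightarrow> harmonic d n \<gamma> u \<longleftrightarrow> harmonic_in d (\<lambda>_. 1) (\<lambda>_. int n) \<gamma> u"
  unfolding harmonic_def harmonic_in_def laplacian_def
  by (simp add: Nbr_eq_lattice_nbrs Dom_eq_lbox[symmetric])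

lemma current_eq_boundary_current:
  assumes n: "1 \<le> n" and b: "b \<in> Bdry d n"
  shows "current d n \<gamma> u b = boundary_current d (\<lambda>_. 1) (\<lambda>_. int n) \<gamma> u b"
proof -
  have lohi: "\<forall>i<d. (\<lambda>_. 1) i \<le> (\<lambda>_. int n) i" using n by simp
  have b': "b \<in> lbox_bdry d (\<lambda>_. 1) (\<lambda>_. int n)" using b Bdry_eq_lbox_bdry[OF n] by blast
  obtain q where q: "q \<in> lattice_nbrs b" "q \<in> lbox d (\<lambda>_. 1) (\<lambda>_. int n)"
    using b' lohi by (rule lbox_bdry_ex_nbr)
  then have "bnbr d n b = q" using bnbr_eq[OF n b] by (simp add: Dom_eq_lbox)
  then show ?thesis using b boundary_current_eq[OF b' lohi q] by (simp add: current_def)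
qed

definition dirichlet_solution :: "nat \<Rightarrow> nat \<Rightarrow> (int list set \<Rightarrow> real) \<Rightarrow> (int list \<Rightarrow> real) \<Rightarrow>
    (int list \<Rightarrow> real) \<Rightarrow> bool" where
  "dirichlet_solution d n \<gamma> \<phi> u \<longleftrightarrow>
     u \<in> extensional (Dom d n \<union> Bdry d n) \<and> harmonic d n \<gamma> u \<and> (\<forall>b\<in>Bdry d n. u b = \<phi> b)"

lemma dirichlet_solution_restrict:
  assumes n: "1 \<le> n" and u: "harmonic_in d (\<lambda>_. 1) (\<lambda>_. int n) \<gamma> u"
    and bd: "\<And>b. b \<in> Bdry d n \<Longrightarrow> u b = \<phi> b"
  shows "dirichlet_solution d n \<gamma> \<phi> (restrict u (Dom d n \<union> Bdry d n))"
proof -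
  have "harmonic_in d (\<lambda>_. 1) (\<lambda>_. int n) \<gamma> (restrict u (Dom d n \<union> Bdry d n))"
    using u harmonic_in_cong[where f = "restrict u (Dom d n \<union> Bdry d n)" and g = u]
    by (simp add: Dom_Un_Bdry_eq[OF n])
  then show ?thesis using bd by (simp add: dirichlet_solution_def harmonic_iff_harmonic_in[OF n])
qed

lemma dirichlet_solution_exists:
  assumes n: "1 \<le> n" and pos: "pos_conductivity d (\<lambda>_. 1) (\<lambda>_. int n) \<gamma>"
  obtains u where "dirichlet_solution d n \<gamma> \<phi> u"
proof -
  let ?C = "lbox_closure d (\<lambda>_. 1) (\<lambda>_. int n)"
  obtain u where u: "\<forall>p\<in>lbox d (\<lambda>_. 1) (\<lambda>_. int n).
      (\<Sum>q\<in>?C. edge_weight d (\<lambda>_. 1) (\<lambda>_. int n) \<gamma> p q * (u q - u p)) = 0"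
    "\<forall>b\<in>?C - lbox d (\<lambda>_. 1) (\<lambda>_. int n). u b = \<phi> b"
    using dirichlet_problem_solvable[where c = "edge_weight d (\<lambda>_. 1) (\<lambda>_. int n) \<gamma>",
      OF finite_lbox_closure lbox_subset_closure edge_weight_commute edge_weight_nonneg[OF pos]]
    by blast
  have "harmonic_in d (\<lambda>_. 1) (\<lambda>_. int n) \<gamma> u"
    using u(1) by (simp add: harmonic_in_def laplacian_def sum_edge_weight_lbox)
  moreover have "u b = \<phi> b" if "b \<in> Bdry d n" for b
    using u(2) that by (simp add: Bdry_eq_lbox_bdry[OF n] closure_minus_lbox)
  ultimately show ?thesis using dirichlet_solution_restrict[OF n] that by blast
qed

lemma dirichlet_solution_unique:
  assumes n: "1 \<le> n" and d0: "0 < d" and pos: "pos_conductivity d (\<lambda>_. 1) (\<lambda>_. int n) \<gamma>"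
    and u: "dirichlet_solution d n \<gamma> \<phi> u" and v: "dirichlet_solution d n \<gamma> \<phi> v"
  shows "u = v"
proof -
  have hw: "harmonic_in d (\<lambda>_. 1) (\<lambda>_. int n) \<gamma> (\<lambda>x. u x - v x)"
    using u v harmonic_in_diff unfolding dirichlet_solution_def harmonic_iff_harmonic_in[OF n] by blast
  have bw: "\<forall>b\<in>lbox_bdry d (\<lambda>_. 1) (\<lambda>_. int n). u b - v b = 0"
  proof
    fix b assume "b \<in> lbox_bdry d (\<lambda>_. 1) (\<lambda>_. int n)"
    then have "b \<in> Bdry d n" using Bdry_eq_lbox_bdry[OF n] by blast
    then show "u b - v b = 0" using u v unfolding dirichlet_solution_def by simp
  qed
  have "u x - v x = 0" if "x \<in> Dom d n" for x
    using harmonic_in_zero_bdry[OF pos d0 hw bw] that unfolding Dom_eq_lbox .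
  moreover have "u x = v x" if "x \<in> Bdry d n" for x
    using u v that unfolding dirichlet_solution_def by simp
  ultimately show "u = v"
    using u v unfolding dirichlet_solution_def by (intro extensionalityI[of u "Dom d n \<union> Bdry d n"]) auto
qed

lemma harm_ext_eq_iff:
  assumes n: "1 \<le> n" and d0: "0 < d" and pos: "pos_conductivity d (\<lambda>_. 1) (\<lambda>_. int n) \<gamma>"
  shows "harm_ext d n \<gamma> \<phi> = u \<longleftrightarrow> dirichlet_solution d n \<gamma> \<phi> u"
proof -
  have "\<exists>!u. dirichlet_solution d n \<gamma> \<phi> u"
    using dirichlet_solution_exists[OF n pos] dirichlet_solution_unique[OF n d0 pos] by metis
  moreover have "harm_ext d n \<gamma> \<phi> = (THE u. dirichlet_solution d n \<gamma> \<phi> u)"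
    unfolding harm_ext_def dirichlet_solution_def ..
  ultimately show ?thesis using the1_equality theI' by metis
qed

lemma cauchy_data_incl_of_DtN_eq:
  assumes n: "1 \<le> n" and d0: "0 < d"
    and pos: "pos_conductivity d (\<lambda>_. 1) (\<lambda>_. int n) \<gamma>"
    and pos': "pos_conductivity d (\<lambda>_. 1) (\<lambda>_. int n) \<gamma>'"
    and DtN: "\<forall>\<phi>. DtN d n \<gamma> \<phi> = DtN d n \<gamma>' \<phi>"
  shows "cauchy_data_incl d (\<lambda>_. 1) (\<lambda>_. int n) \<gamma> \<gamma>'"
  unfolding cauchy_data_incl_def
proof (intro allI impI)
  fix u assume u: "harmonic_in d (\<lambda>_. 1) (\<lambda>_. int n) \<gamma> u"
  let ?w = "restrict u (Dom d n \<union> Bdry d n)"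
  let ?u' = "harm_ext d n \<gamma>' u"
  have w: "harm_ext d n \<gamma> u = ?w"
    using harm_ext_eq_iff[OF n d0 pos] dirichlet_solution_restrict[OF n u] by blast
  have "dirichlet_solution d n \<gamma>' u ?u'" using harm_ext_eq_iff[OF n d0 pos'] by blast
  then have u': "harmonic_in d (\<lambda>_. 1) (\<lambda>_. int n) \<gamma>' ?u'" "\<And>b. b \<in> Bdry d n \<Longrightarrow> ?u' b = u b"
    unfolding dirichlet_solution_def harmonic_iff_harmonic_in[OF n] by blast+
  have "boundary_current d (\<lambda>_. 1) (\<lambda>_. int n) \<gamma>' ?u' b =
      boundary_current d (\<lambda>_. 1) (\<lambda>_. int n) \<gamma> u b" if b: "b \<in> Bdry d n" for b
  proof -
    have "boundary_current d (\<lambda>_. 1) (\<lambda>_. int n) \<gamma>' ?u' b = DtN d n \<gamma>' u b"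
      using current_eq_boundary_current[OF n b] by (simp add: DtN_def)
    also have "\<dots> = DtN d n \<gamma> u b" using DtN by simp
    also have "\<dots> = boundary_current d (\<lambda>_. 1) (\<lambda>_. int n) \<gamma> ?w b"
      using current_eq_boundary_current[OF n b] w by (simp add: DtN_def)
    also have "\<dots> = boundary_current d (\<lambda>_. 1) (\<lambda>_. int n) \<gamma> u b"
      using b by (intro boundary_current_cong) (simp_all add: Dom_Un_Bdry_eq[OF n, symmetric])
    finally show ?thesis .
  qed
  then show "\<exists>u'. harmonic_in d (\<lambda>_. 1) (\<lambda>_. int n) \<gamma>' u' \<and>
      (\<forall>b\<in>lbox_bdry d (\<lambda>_. 1) (\<lambda>_. int n). u' b = u b \<and>
        boundary_current d (\<lambda>_. 1) (\<lambda>_. int n) \<gamma>' u' b = boundary_current d (\<lambda>_. 1) (\<lambda>_. int n) \<gamma> u b)"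
    using u' unfolding Bdry_eq_lbox_bdry[OF n] by blast
qed

lemma pos_conductivity_of_Edges:
  assumes n: "1 \<le> n" and pos: "\<forall>e\<in>Edges d n. \<gamma> e > 0"
  shows "pos_conductivity d (\<lambda>_. 1) (\<lambda>_. int n) \<gamma>"
  unfolding pos_conductivity_def
proof (intro allI impI)
  fix x y assume "y \<in> lattice_nbrs x" "x \<in> lbox d (\<lambda>_. 1) (\<lambda>_. int n) \<or> y \<in> lbox d (\<lambda>_. 1) (\<lambda>_. int n)"
  then have "{x, y} \<in> Edges d n" by (simp add: Edges_iff[OF n])
  then show "0 < \<gamma> {x, y}" using pos by blast
qed

theorem theorem1p1:
  fixes d n :: nat and \<gamma> \<gamma>' :: "int list set \<Rightarrow> real"
  assumes "d \<ge> 2" and "n \<ge> 1"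
    and "\<forall>e\<in>Edges d n. \<gamma> e > 0"
    and "\<forall>e\<in>Edges d n. \<gamma>' e > 0"
    and "\<forall>\<phi>. DtN d n \<gamma> \<phi> = DtN d n \<gamma>' \<phi>"
  shows "\<forall>e\<in>Edges d n. \<gamma> e = \<gamma>' e"
proof
  have n: "1 \<le> n" and d0: "0 < d" using assms(1,2) by auto
  note pos = pos_conductivity_of_Edges[OF n assms(3)] pos_conductivity_of_Edges[OF n assms(4)]
  have R: "cauchy_data_incl d (\<lambda>_. 1) (\<lambda>_. int n) \<gamma> \<gamma>'"
    by (rule cauchy_data_incl_of_DtN_eq[OF n d0 pos assms(5)])
  have lohi: "\<forall>i<d. (\<lambda>_. 1) i \<le> (\<lambda>_. int n) i" using n by simp
  have agree: "edges_agree d (\<lambda>_. 1) (\<lambda>_. int n) \<gamma> \<gamma>'"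
    by (rule edges_agree_lbox[OF assms(1) lohi pos R])
  fix e assume e: "e \<in> Edges d n"
  then obtain p q where pq: "e = {p, q}" unfolding Edges_def by blast
  then have "q \<in> lattice_nbrs p \<and> (p \<in> lbox d (\<lambda>_. 1) (\<lambda>_. int n) \<or> q \<in> lbox d (\<lambda>_. 1) (\<lambda>_. int n))"
    using e Edges_iff[OF n] by simp
  then show "\<gamma> e = \<gamma>' e" using agree pq unfolding edges_agree_def by blast
qed

end
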